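(* Let $L>0$, $h^*>0$, $g>0$, $\mu>0$, $\sigma>0$ and $\bar\kappa\ge 0$ be constants, let $c=\sqrt{gh^*}$, and let $\bar S=\{\varphi\in H^2(0,L):\varphi'(0)=\varphi'(L)=0\}$. There exist constants $\bar M,\bar\lambda,\Gamma>0$ such that for every $f\in C^0(\mathbb{R}_+)$ and every function $$\varphi\in C^0(\mathbb{R}_+;\bar S\cap H^4(0,L))\cap C^1(\mathbb{R}_+;\bar S)\cap C^2(\mathbb{R}_+;L^2(0,L))$$ that satisfies for all $t\ge0$ $$\varphi_{tt}=c^2\varphi_{xx}-\sigma h^*\varphi_{xxxx}+\mu\varphi_{txx}-\bar\kappa\varphi_t \ \text{ on } (0,L),$$ $$\varphi_x(t,0)=\varphi_x(t,L)=0,\qquad \varphi_{xxx}(t,0)=\varphi_{xxx}(t,L)=-\sigma^{-1}f(t),$$ $$\int_0^L\varphi(t,x)\,dx=\int_0^L\varphi_t(t,x)\,dx=0,$$ the following estimate holds for all $t\ge 0$: $$P(t)\le \bar M\exp(-\bar\lambda t)P(0)+\Gamma\max_{0\le s\le t}\big(\exp(-\bar\lambda(t-s))|f(s)|\big),$$ where $P(t):=\big(\|\varphi[t]\|_2^2+\|\varphi_x[t]\|_2^2+\|\varphi_{xx}[t]\|_2^2+\|\varphi_t[t]\|_2^2\big)^{1/2}$.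
   Context: $\mathbb{R}_+=[0,+\infty)$. For a function $\varphi$ of $(t,x)$, $\varphi[t]$ denotes the profile $x\mapsto\varphi(t,x)$, and $\|\cdot\|_2$ is the $L^2(0,L)$ norm. For a normed space $Y$, $C^k(\mathbb{R}_+;Y)$ denotes $k$-times continuously differentiable maps $\mathbb{R}_+\to Y$; time derivatives (and mixed derivatives) are understood as derivatives of the maps $t\mapsto\varphi[t]$ (resp. $t\mapsto\varphi_{xx}[t]$) in the corresponding function spaces; $x$-derivatives are weak spatial derivatives. $H^k(0,L)$ is the usual Sobolev space. *)

theory Defs
  imports "HOL-Analysis.Analysis"
begin

definition in_L2 :: "real \<Rightarrow> (real \<Rightarrow> real) \<Rightarrow> bool" where
  "in_L2 L u \<longleftrightarrow> set_borel_measurable lborel {0..L} u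
      \<and> set_integrable lborel {0..L} (\<lambda>x. (u x)^2)"

definition norm2 :: "real \<Rightarrow> (real \<Rightarrow> real) \<Rightarrow> real" where
  "norm2 L u = sqrt (LINT x:{0..L}|lborel. (u x)^2)"

definition test_fun :: "real \<Rightarrow> (real \<Rightarrow> real) \<Rightarrow> bool" where
  "test_fun L \<psi> \<longleftrightarrow> (\<forall>n x. (deriv ^^ n) \<psi> differentiable (at x))
      \<and> (\<exists>a b. 0 < a \<and> a < b \<and> b < L \<and> (\<forall>x. x \<notin> {a..b} \<longrightarrow> \<psi> x = 0))"

definition weak_deriv :: "real \<Rightarrow> (real \<Rightarrow> real) \<Rightarrow> (real \<Rightarrow> real) \<Rightarrow> bool" where
  "weak_deriv L u v \<longleftrightarrow> set_integrable lborel {0..L} u \<and> set_integrable lborel {0..L} v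
      \<and> (\<forall>\<psi>. test_fun L \<psi> \<longrightarrow>
            (LINT x:{0..L}|lborel. u x * deriv \<psi> x) = - (LINT x:{0..L}|lborel. v x * \<psi> x))"

text \<open>H^k distance, where u i, v i are the i-th (weak) x-derivatives.\<close>
definition Hk_dist :: "real \<Rightarrow> nat \<Rightarrow> (nat \<Rightarrow> real \<Rightarrow> real) \<Rightarrow> (nat \<Rightarrow> real \<Rightarrow> real) \<Rightarrow> real" where
  "Hk_dist L k u v = sqrt (\<Sum>i\<le>k. (norm2 L (\<lambda>x. u i x - v i x))^2)"

end

theory Submission
  imports Defs
begin

text \<open>Energy method. For small \<open>\<epsilon>\<close> the functional
  \<open>V = |phi_t|^2/2 + c^2 |phi_x|^2/2 + sigma h |phi_xx|^2/2
       + \<epsilon> (<phi, phi_t> + mu |phi_x|^2/2 + kappa |phi|^2/2)\<close>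
  is equivalent to \<open>P^2\<close>, since the mean-free \<open>phi\<close> and \<open>phi_t\<close> obey the Poincare-Wirtinger
  inequality \<open>|u| \<le> L |u_x|\<close>. Integrating by parts against the boundary conditions, the only
  boundary contribution is \<open>h f (\<integral>phi_tx + \<epsilon> \<integral>phi_x)\<close>; Young's inequality absorbs it and gives
  \<open>V' \<le> -\<gamma> V + C f^2\<close>. Comparing with an exponential yields
  \<open>V(t) \<le> exp(-\<gamma> t) V(0) + (2C/\<gamma>) S^2\<close> with \<open>S = max exp(-\<gamma>(t-s)/4) |f(s)|\<close>, and taking
  square roots gives the estimate with \<open>\<lambda> = \<gamma>/4\<close>.

  Weak derivatives are reduced to primitives by the du Bois-Reymond lemma: a function with weak
  derivative \<open>v\<close> agrees a.e. with a constant plus \<open>\<integral>\<^sub>0\<^sup>x v\<close>. Integration by parts and the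
  Poincare-Wirtinger inequality are then proved for primitives, using Fubini.\<close>

definition lborel_Icc :: "real \<Rightarrow> real measure" where
  "lborel_Icc L = restrict_space lborel {0..L}"

lemma space_lborel_Icc[simp]: "space (lborel_Icc L) = {0..L}"
  by (simp add: lborel_Icc_def space_restrict_space)

lemma set_integral_eq_lborel_Icc:
  fixes f :: "real \<Rightarrow> real"
  shows "(LINT x:{0..L}|lborel. f x) = integral\<^sup>L (lborel_Icc L) f"
  unfolding lborel_Icc_def set_lebesgue_integral_def
  using integral_restrict_space[of "{0..L}" lborel f] by simp

lemma set_integrable_iff_lborel_Icc:
  fixes f :: "real \<Rightarrow> real"
  shows "set_integrable lborel {0..L} f \<longleftrightarrow> integrable (lborel_Icc L) f"
  unfolding lborel_Icc_def using set_integrable_eq[of "{0..L}" lborel f] by simp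

lemma set_borel_measurable_iff_lborel_Icc:
  fixes f :: "real \<Rightarrow> real"
  shows "set_borel_measurable lborel {0..L} f \<longleftrightarrow> f \<in> borel_measurable (lborel_Icc L)"
  unfolding lborel_Icc_def set_borel_measurable_def
  using borel_measurable_restrict_space_iff[of "{0..L}" lborel f] by simp

lemma integral_lborel_Icc_indicator:
  fixes f :: "real \<Rightarrow> real"
  shows "integral\<^sup>L (lborel_Icc L) f = (\<integral>x. indicator {0..L} x * f x \<partial>lborel)"
  using set_integral_eq_lborel_Icc[of L f] unfolding set_lebesgue_integral_def by simp

lemma integrable_lborel_Icc_indicator:
  fixes f :: "real \<Rightarrow> real"
  shows "integrable (lborel_Icc L) f \<longleftrightarrow> integrable lborel (\<lambda>x. indicator {0..L} x * f x)"
  using set_integrable_iff_lborel_Icc[of L f] unfolding set_integrable_def by simp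

lemma finite_measure_lborel_Icc: "finite_measure (lborel_Icc L)"
proof (rule finite_measureI)
  show "emeasure (lborel_Icc L) (space (lborel_Icc L)) \<noteq> \<infinity>"
    unfolding lborel_Icc_def
    by (cases "0 \<le> L") (simp_all add: emeasure_restrict_space space_restrict_space)
qed

lemma measure_lborel_Icc: "0 \<le> L \<Longrightarrow> measure (lborel_Icc L) {0..L} = L"
  unfolding measure_def lborel_Icc_def by (subst emeasure_restrict_space) auto

lemma integrable_const_lborel_Icc[simp]: "integrable (lborel_Icc L) (\<lambda>x. c::real)"
proof -
  interpret finite_measure "lborel_Icc L" by (rule finite_measure_lborel_Icc)
  show ?thesis by simp
qed

lemma borel_measurable_lborel_Icc_continuous_on:
  fixes f :: "real \<Rightarrow> real"
  shows "continuous_on {0..L} f \<Longrightarrow> f \<in> borel_measurable (lborel_Icc L)"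
  unfolding lborel_Icc_def
  by (metis borel_measurable_continuous_on_restrict measurable_lborel1 sets_lborel
      sets_restrict_space_cong measurable_cong_sets)

lemma integrable_lborel_Icc_continuous_on:
  fixes f :: "real \<Rightarrow> real"
  shows "continuous_on {0..L} f \<Longrightarrow> integrable (lborel_Icc L) f"
  using set_integrable_iff_lborel_Icc borel_integrable_atLeastAtMost' by blast

lemma integral_lborel_Icc_eq_integral:
  fixes f :: "real \<Rightarrow> real"
  assumes "continuous_on {0..L} f"
  shows "integral\<^sup>L (lborel_Icc L) f = integral {0..L} f"
  using set_integral_eq_lborel_Icc[of L f]
    set_borel_integral_eq_integral(2)[OF borel_integrable_atLeastAtMost'[OF assms]]
  by simp

lemma integrable_mult_bounded:
  fixes B G :: "'a \<Rightarrow> real"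
  assumes "integrable M B" "G \<in> borel_measurable M" "\<And>y. y \<in> space M \<Longrightarrow> \<bar>G y\<bar> \<le> C"
  shows "integrable M (\<lambda>y. B y * G y)"
proof (rule Bochner_Integration.integrable_bound[of _ "\<lambda>y. \<bar>B y\<bar> * C"])
  show "integrable M (\<lambda>y. \<bar>B y\<bar> * C)" using assms(1) by auto
  show "(\<lambda>y. B y * G y) \<in> borel_measurable M" using assms(1,2) by auto
  show "AE y in M. norm (B y * G y) \<le> norm (\<bar>B y\<bar> * C)"
    using AE_space
  proof eventually_elim
    case (elim y)
    then have "\<bar>B y\<bar> * \<bar>G y\<bar> \<le> \<bar>B y\<bar> * C" using assms(3) by (simp add: mult_left_mono)
    moreover have "0 \<le> C" using assms(3)[OF elim] by simp
    ultimately show ?case by (simp add: abs_mult)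
  qed
qed

lemma integrable_mult_continuous_on:
  fixes B G :: "real \<Rightarrow> real"
  assumes "integrable (lborel_Icc L) B" "continuous_on {0..L} G"
  shows "integrable (lborel_Icc L) (\<lambda>y. B y * G y)"
proof -
  have "bounded (G ` {0..L})"
    by (intro compact_imp_bounded compact_continuous_image assms(2) compact_Icc)
  then obtain C where "\<forall>y\<in>G ` {0..L}. norm y \<le> C" unfolding bounded_iff by blast
  then have C: "\<And>x. x \<in> {0..L} \<Longrightarrow> \<bar>G x\<bar> \<le> C" by simp
  show ?thesis
    by (rule integrable_mult_bounded[OF assms(1) borel_measurable_lborel_Icc_continuous_on[OF assms(2)],
          where C = C]) (use C in simp)
qed

lemma AE_lborel_Icc_open:
  assumes "AE x in lborel. 0 < x \<and> x < L \<longrightarrow> P x"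
  shows "AE x in lborel_Icc L. P x"
proof -
  have "AE x in lborel. x \<in> {0..L} \<longrightarrow> P x"
    using assms AE_lborel_singleton[of 0] AE_lborel_singleton[of L]
    by eventually_elim auto
  then show ?thesis unfolding lborel_Icc_def by (subst AE_restrict_space_iff) auto
qed

lemma in_L2_iff_lborel_Icc:
  "in_L2 L u \<longleftrightarrow> u \<in> borel_measurable (lborel_Icc L) \<and> integrable (lborel_Icc L) (\<lambda>x. (u x)^2)"
  unfolding in_L2_def set_borel_measurable_iff_lborel_Icc set_integrable_iff_lborel_Icc ..

lemma in_L2_measurable: "in_L2 L u \<Longrightarrow> u \<in> borel_measurable (lborel_Icc L)"
  by (simp add: in_L2_iff_lborel_Icc)

lemma integrable_mult_in_L2:
  assumes "in_L2 L u" "in_L2 L v"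
  shows "integrable (lborel_Icc L) (\<lambda>x. u x * v x)"
proof (rule Bochner_Integration.integrable_bound)
  show "integrable (lborel_Icc L) (\<lambda>x. (u x)^2 + (v x)^2)"
    using assms by (auto simp: in_L2_iff_lborel_Icc)
  show "(\<lambda>x. u x * v x) \<in> borel_measurable (lborel_Icc L)"
    using assms by (auto simp: in_L2_iff_lborel_Icc)
  have "\<bar>a * b\<bar> \<le> a^2 + b^2" for a b :: real
  proof -
    have "2 * \<bar>a\<bar> * \<bar>b\<bar> \<le> a^2 + b^2" using sum_squares_bound[of "\<bar>a\<bar>" "\<bar>b\<bar>"] by simp
    moreover have "0 \<le> \<bar>a\<bar> * \<bar>b\<bar>" by simp
    ultimately show ?thesis unfolding abs_mult by linarith
  qed
  then show "AE x in lborel_Icc L. norm (u x * v x) \<le> norm ((u x)^2 + (v x)^2)"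
    by simp
qed

lemma in_L2_const: "in_L2 L (\<lambda>x. c)"
  unfolding in_L2_iff_lborel_Icc by simp

lemma in_L2_add:
  assumes "in_L2 L u" "in_L2 L v"
  shows "in_L2 L (\<lambda>x. u x + v x)"
proof -
  have [measurable]: "u \<in> borel_measurable (lborel_Icc L)" "v \<in> borel_measurable (lborel_Icc L)"
    using assms by (auto simp: in_L2_iff_lborel_Icc)
  have "integrable (lborel_Icc L) (\<lambda>x. (u x)^2 + (v x)^2 + 2 * (u x * v x))"
    using assms integrable_mult_in_L2[OF assms] by (auto simp: in_L2_iff_lborel_Icc)
  moreover have "(\<lambda>x. (u x)^2 + (v x)^2 + 2 * (u x * v x)) = (\<lambda>x. (u x + v x)^2)"
    by (auto simp: power2_sum algebra_simps)
  ultimately show ?thesis unfolding in_L2_iff_lborel_Icc by simp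
qed

lemma in_L2_cmult:
  assumes "in_L2 L u"
  shows "in_L2 L (\<lambda>x. c * u x)"
proof -
  have [measurable]: "u \<in> borel_measurable (lborel_Icc L)"
    using assms by (auto simp: in_L2_iff_lborel_Icc)
  have "(\<lambda>x. c * u x) \<in> borel_measurable (lborel_Icc L)" by measurable
  then show ?thesis using assms unfolding in_L2_iff_lborel_Icc by (simp add: power_mult_distrib)
qed

lemma in_L2_diff:
  assumes "in_L2 L u" "in_L2 L v"
  shows "in_L2 L (\<lambda>x. u x - v x)"
  using in_L2_add[OF assms(1) in_L2_cmult[OF assms(2), of "-1"]] by simp

lemma in_L2_divide:
  assumes "in_L2 L u"
  shows "in_L2 L (\<lambda>x. u x / c)"
  using in_L2_cmult[OF assms, of "1/c"] by simp

definition L2_inner :: "real \<Rightarrow> (real \<Rightarrow> real) \<Rightarrow> (real \<Rightarrow> real) \<Rightarrow> real" where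
  "L2_inner L u v = integral\<^sup>L (lborel_Icc L) (\<lambda>x. u x * v x)"

lemma L2_inner_commute: "L2_inner L u v = L2_inner L v u"
  unfolding L2_inner_def by (simp add: mult.commute)

lemma L2_inner_self_nonneg: "0 \<le> L2_inner L u u"
  unfolding L2_inner_def by (intro integral_nonneg_AE AE_I2) simp

lemma norm2_eq_sqrt_L2_inner: "norm2 L u = sqrt (L2_inner L u u)"
  unfolding norm2_def L2_inner_def set_integral_eq_lborel_Icc by (simp add: power2_eq_square)

lemma norm2_power2: "(norm2 L u)^2 = L2_inner L u u"
  by (simp add: norm2_eq_sqrt_L2_inner L2_inner_self_nonneg)

lemma norm2_nonneg: "0 \<le> norm2 L u"
  by (simp add: norm2_eq_sqrt_L2_inner L2_inner_self_nonneg)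

lemma L2_inner_one_one: "0 \<le> L \<Longrightarrow> L2_inner L (\<lambda>x. 1) (\<lambda>x. 1) = L"
  unfolding L2_inner_def by (simp add: measure_lborel_Icc)

lemma L2_inner_diff_left:
  "in_L2 L u \<Longrightarrow> in_L2 L v \<Longrightarrow> in_L2 L w \<Longrightarrow>
    L2_inner L (\<lambda>x. u x - v x) w = L2_inner L u w - L2_inner L v w"
  unfolding L2_inner_def by (simp add: left_diff_distrib integrable_mult_in_L2)

lemma L2_inner_diff_right:
  "in_L2 L u \<Longrightarrow> in_L2 L v \<Longrightarrow> in_L2 L w \<Longrightarrow>
    L2_inner L w (\<lambda>x. u x - v x) = L2_inner L w u - L2_inner L w v"
  by (simp add: L2_inner_commute[of L w] L2_inner_diff_left)

lemma L2_inner_cmult_left: "L2_inner L (\<lambda>x. c * u x) w = c * L2_inner L u w"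
  unfolding L2_inner_def by (simp add: mult.assoc)

lemma L2_inner_cmult_right: "L2_inner L w (\<lambda>x. c * u x) = c * L2_inner L w u"
  by (simp add: L2_inner_commute[of L w] L2_inner_cmult_left)

lemma L2_inner_Cauchy_Schwarz_sq:
  assumes u: "in_L2 L u" and v: "in_L2 L v"
  shows "(L2_inner L u v)^2 \<le> L2_inner L u u * L2_inner L v v"
proof -
  define a b c where "a = L2_inner L u u" and "b = L2_inner L u v" and "c = L2_inner L v v"
  have key: "0 \<le> a * s^2 - 2 * s * b + c" for s
  proof -
    have "0 \<le> integral\<^sup>L (lborel_Icc L) (\<lambda>x. (s * u x - v x)^2)"
      by (rule integral_nonneg_AE) simp
    also have "\<dots> = integral\<^sup>L (lborel_Icc L)
        (\<lambda>x. s^2 * (u x * u x) - 2 * s * (u x * v x) + v x * v x)"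
      by (rule Bochner_Integration.integral_cong) (auto simp: power2_eq_square algebra_simps)
    also have "\<dots> = a * s^2 - 2 * s * b + c"
      unfolding a_def b_def c_def L2_inner_def
      using integrable_mult_in_L2[OF u u] integrable_mult_in_L2[OF u v] integrable_mult_in_L2[OF v v]
      by (simp add: mult.commute)
    finally show ?thesis .
  qed
  have "b^2 \<le> a * c"
  proof (cases "a = 0")
    case True
    have "b = 0"
    proof (rule ccontr)
      assume "b \<noteq> 0"
      then have "2 * ((c + 1) / (2 * b)) * b = c + 1" by (simp add: field_simps)
      then show False using key[of "(c + 1) / (2 * b)"] True by simp
    qed
    then show ?thesis by (simp add: True)
  next
    case False
    then have pos: "0 < a" using L2_inner_self_nonneg[of L u] by (simp add: a_def b_def c_def)
    have "0 \<le> a * (b / a)^2 - 2 * (b / a) * b + c" by (rule key)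
    also have "\<dots> = c - b^2 / a" using pos by (simp add: field_simps power2_eq_square)
    finally show ?thesis using pos by (simp add: field_simps mult.commute)
  qed
  then show ?thesis by (simp add: a_def b_def c_def)
qed

lemma L2_inner_Cauchy_Schwarz:
  assumes "in_L2 L u" "in_L2 L v"
  shows "\<bar>L2_inner L u v\<bar> \<le> norm2 L u * norm2 L v"
proof -
  have "\<bar>L2_inner L u v\<bar> = sqrt ((L2_inner L u v)^2)" by simp
  also have "\<dots> \<le> sqrt (L2_inner L u u * L2_inner L v v)"
    using L2_inner_Cauchy_Schwarz_sq[OF assms] by (rule real_sqrt_le_mono)
  also have "\<dots> = norm2 L u * norm2 L v" by (simp add: norm2_eq_sqrt_L2_inner real_sqrt_mult)
  finally show ?thesis .
qed

definition smooth :: "(real \<Rightarrow> real) \<Rightarrow> bool" where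
  "smooth f \<longleftrightarrow> (\<forall>n x. (deriv ^^ n) f differentiable (at x))"

lemma higher_deriv_Suc: "(deriv ^^ Suc n) f = (deriv ^^ n) (deriv f)"
  by (simp only: funpow_Suc_right o_apply)

declare funpow.simps(2)[simp del]
declare higher_deriv_Suc[simp]

lemma smooth_differentiable: "smooth f \<Longrightarrow> f differentiable (at x)"
  unfolding smooth_def by (metis funpow_0)

lemma smooth_has_real_derivative: "smooth f \<Longrightarrow> (f has_real_derivative deriv f x) (at x)"
  using smooth_differentiable DERIV_deriv_iff_real_differentiable by blast

lemma smooth_deriv: "smooth f \<Longrightarrow> smooth (deriv f)"
  unfolding smooth_def by (metis higher_deriv_Suc)

lemma smooth_continuous_on: "smooth f \<Longrightarrow> continuous_on S f"
  by (meson continuous_at_imp_continuous_on differentiable_imp_continuous_within smooth_differentiable)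

lemma smoothI:
  assumes "\<And>x. (f has_real_derivative g x) (at x)" "smooth g"
  shows "smooth f"
proof -
  have d: "deriv f = g" using assms(1) DERIV_imp_deriv by blast
  show ?thesis unfolding smooth_def
  proof (intro allI)
    fix n x show "(deriv ^^ n) f differentiable (at x)"
    proof (cases n)
      case 0 then show ?thesis using assms(1) real_differentiable_def by auto
    next
      case (Suc m) then show ?thesis using assms(2) unfolding smooth_def by (simp add: higher_deriv_Suc d)
    qed
  qed
qed

lemma deriv_add_fun:
  fixes f g :: "real \<Rightarrow> real"
  assumes "\<And>x. f differentiable (at x)" "\<And>x. g differentiable (at x)"
  shows "deriv (\<lambda>x. f x + g x) = (\<lambda>x. deriv f x + deriv g x)"
proof
  fix x
  have "((\<lambda>x. f x + g x) has_real_derivative deriv f x + deriv g x) (at x)"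
    using assms DERIV_deriv_iff_real_differentiable by (blast intro: DERIV_add)
  then show "deriv (\<lambda>x. f x + g x) x = deriv f x + deriv g x" by (rule DERIV_imp_deriv)
qed

lemma deriv_mult_fun:
  fixes f g :: "real \<Rightarrow> real"
  assumes "\<And>x. f differentiable (at x)" "\<And>x. g differentiable (at x)"
  shows "deriv (\<lambda>x. f x * g x) = (\<lambda>x. deriv f x * g x + f x * deriv g x)"
proof
  fix x
  have "((\<lambda>x. f x * g x) has_real_derivative deriv f x * g x + f x * deriv g x) (at x)"
    using DERIV_mult[OF DERIV_deriv_iff_real_differentiable[THEN iffD2, OF assms(1)]
                        DERIV_deriv_iff_real_differentiable[THEN iffD2, OF assms(2)]]
    by (simp add: mult.commute)
  then show "deriv (\<lambda>x. f x * g x) x = deriv f x * g x + f x * deriv g x" by (rule DERIV_imp_deriv)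
qed

lemma higher_deriv_add:
  fixes f g :: "real \<Rightarrow> real"
  assumes "\<forall>k<n. \<forall>x. (deriv ^^ k) f differentiable (at x)"
      and "\<forall>k<n. \<forall>x. (deriv ^^ k) g differentiable (at x)"
  shows "(deriv ^^ n) (\<lambda>x. f x + g x) = (\<lambda>x. (deriv ^^ n) f x + (deriv ^^ n) g x)"
  using assms
proof (induction n arbitrary: f g)
  case 0 then show ?case by simp
next
  case (Suc n)
  have f0: "\<And>x. f differentiable (at x)" and g0: "\<And>x. g differentiable (at x)"
    using Suc.prems[rule_format, of 0] by auto
  have a1: "\<forall>k<n. \<forall>x. (deriv ^^ k) (deriv f) differentiable (at x)"
    using Suc.prems(1) by (metis Suc_mono higher_deriv_Suc)
  have a2: "\<forall>k<n. \<forall>x. (deriv ^^ k) (deriv g) differentiable (at x)"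
    using Suc.prems(2) by (metis Suc_mono higher_deriv_Suc)
  have "(deriv ^^ Suc n) (\<lambda>x. f x + g x) = (deriv ^^ n) (\<lambda>x. deriv f x + deriv g x)"
    by (simp add: higher_deriv_Suc deriv_add_fun[OF f0 g0])
  also have "\<dots> = (\<lambda>x. (deriv ^^ n) (deriv f) x + (deriv ^^ n) (deriv g) x)"
    by (rule Suc.IH[OF a1 a2])
  finally show ?case by (simp add: higher_deriv_Suc)
qed

lemma smooth_add: "smooth f \<Longrightarrow> smooth g \<Longrightarrow> smooth (\<lambda>x. f x + g x)"
  unfolding smooth_def by (subst higher_deriv_add) (auto intro: differentiable_add)

lemma higher_deriv_mult_differentiable:
  "\<forall>f g. smooth f \<longrightarrow> smooth g \<longrightarrow> (\<forall>k\<le>n. \<forall>x. (deriv ^^ k) (\<lambda>x. f x * g x) differentiable (at x))"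
proof (induction n)
  case 0
  then show ?case by (auto intro: differentiable_mult smooth_differentiable)
next
  case (Suc n)
  show ?case
  proof (intro allI impI)
    fix f g k x assume f: "smooth f" and g: "smooth g" and k: "k \<le> Suc n"
    show "(deriv ^^ k) (\<lambda>x. f x * g x) differentiable (at x)"
    proof (cases "k \<le> n")
      case True then show ?thesis using Suc.IH f g by blast
    next
      case False
      then have kk: "k = Suc n" using k by simp
      have f': "smooth (deriv f)" and g': "smooth (deriv g)" using f g smooth_deriv by auto
      have A: "\<forall>k\<le>n. \<forall>x. (deriv ^^ k) (\<lambda>x. deriv f x * g x) differentiable (at x)"
        using Suc.IH f' g by blast
      have B: "\<forall>k\<le>n. \<forall>x. (deriv ^^ k) (\<lambda>x. f x * deriv g x) differentiable (at x)"
        using Suc.IH f g' by blast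
      have "(deriv ^^ k) (\<lambda>x. f x * g x) = (deriv ^^ n) (\<lambda>x. deriv f x * g x + f x * deriv g x)"
        using kk by (simp add: higher_deriv_Suc deriv_mult_fun[OF smooth_differentiable[OF f] smooth_differentiable[OF g]])
      also have "\<dots> = (\<lambda>x. (deriv ^^ n) (\<lambda>x. deriv f x * g x) x + (deriv ^^ n) (\<lambda>x. f x * deriv g x) x)"
        by (rule higher_deriv_add) (use A B in auto)
      finally show ?thesis using A B by (auto intro: differentiable_add)
    qed
  qed
qed

lemma smooth_mult: "smooth f \<Longrightarrow> smooth g \<Longrightarrow> smooth (\<lambda>x. f x * g x)"
  unfolding smooth_def[of "\<lambda>x. f x * g x"] using higher_deriv_mult_differentiable by blast

lemma higher_deriv_affine:
  assumes "smooth f"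
  shows "(deriv ^^ n) (\<lambda>x. c * f (a * x + b)) = (\<lambda>x. c * a ^ n * (deriv ^^ n) f (a * x + b))"
  using assms
proof (induction n arbitrary: f c)
  case 0 then show ?case by simp
next
  case (Suc n)
  have d: "deriv (\<lambda>x. c * f (a * x + b)) = (\<lambda>x. (c * a) * deriv f (a * x + b))"
  proof
    fix x
    have "((\<lambda>x. c * f (a * x + b)) has_real_derivative c * (deriv f (a * x + b) * a)) (at x)"
      by (rule DERIV_cmult, rule DERIV_chain2[OF smooth_has_real_derivative[OF Suc.prems]])
         (auto intro!: derivative_eq_intros)
    then show "deriv (\<lambda>x. c * f (a * x + b)) x = (c * a) * deriv f (a * x + b)"
      by (subst DERIV_imp_deriv) (auto simp: algebra_simps)
  qed
  show ?case
    by (simp only: higher_deriv_Suc d Suc.IH[OF smooth_deriv[OF Suc.prems]]) (simp add: algebra_simps)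
qed

lemma smooth_affine:
  assumes "smooth f"
  shows "smooth (\<lambda>x. c * f (a * x + b))"
  unfolding smooth_def
proof (intro allI)
  fix n x
  have "((deriv ^^ n) f \<circ> (\<lambda>x. a * x + b)) differentiable (at x)"
    using assms unfolding smooth_def
    by (intro differentiable_chain_at) (auto intro!: derivative_intros)
  then have "(\<lambda>x. c * a ^ n * (deriv ^^ n) f (a * x + b)) differentiable (at x)"
    by (intro differentiable_mult differentiable_const) (simp_all add: o_def)
  then show "(deriv ^^ n) (\<lambda>x. c * f (a * x + b)) differentiable (at x)"
    by (simp add: higher_deriv_affine[OF assms])
qed

lemma smooth_cmult: "smooth f \<Longrightarrow> smooth (\<lambda>x. c * f x)"
  using smooth_affine[of f c 1 0] by simp

definition poly_exp_recip :: "real poly \<Rightarrow> real \<Rightarrow> real" where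
  "poly_exp_recip P x = (if x > 0 then poly P (1/x) * exp (-(1/x)) else 0)"

text \<open>\<open>(P(1/x) exp(-1/x))' = Q(1/x) exp(-1/x)\<close> with \<open>Q(y) = y^2 (P(y) - P'(y))\<close>, so every
  derivative of the flat function \<open>poly_exp_recip 1\<close> is again of this form.\<close>

definition poly_exp_recip_step :: "real poly \<Rightarrow> real poly" where
  "poly_exp_recip_step P = [:0,0,1:] * (P - pderiv P)"

lemma tendsto_poly_mult_exp_neg_at_top: "((\<lambda>y. poly (R::real poly) y * exp (-y)) \<longlongrightarrow> 0) at_top"
proof -
  have "((\<lambda>y. \<Sum>i\<le>degree R. coeff R i * (y ^ i / exp y)) \<longlongrightarrow> (\<Sum>i\<le>degree R. coeff R i * 0)) at_top"
    by (intro tendsto_sum tendsto_mult tendsto_const tendsto_power_div_exp_0)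
  moreover have "(\<lambda>y. \<Sum>i\<le>degree R. coeff R i * (y ^ i / exp y)) = (\<lambda>y. poly R y * exp (-y))"
    by (simp add: poly_altdef sum_distrib_right exp_minus divide_inverse mult.assoc)
  ultimately show ?thesis by simp
qed

lemma poly_exp_recip_deriv_pos:
  assumes "x > 0"
  shows "(poly_exp_recip P has_real_derivative poly_exp_recip (poly_exp_recip_step P) x) (at x)"
proof -
  have d: "((\<lambda>x. poly P (1/x) * exp (-(1/x))) has_real_derivative
        poly (pderiv P) (1/x) * (- 1 / x^2) * exp (-(1/x)) + poly P (1/x) * (exp (-(1/x)) * (1 / x^2))) (at x)"
    using assms
    by (auto intro!: derivative_eq_intros DERIV_chain2[OF poly_DERIV]
             simp: power2_eq_square field_simps)
  have "poly (pderiv P) (1/x) * (- 1 / x^2) * exp (-(1/x)) + poly P (1/x) * (exp (-(1/x)) * (1 / x^2))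
        = poly_exp_recip (poly_exp_recip_step P) x"
    using assms by (simp add: poly_exp_recip_def poly_exp_recip_step_def power2_eq_square field_simps)
  with d have d2: "((\<lambda>x. poly P (1/x) * exp (-(1/x))) has_real_derivative poly_exp_recip (poly_exp_recip_step P) x) (at x)"
    by simp
  show ?thesis
    by (rule has_field_derivative_transform_within_open[OF d2, of "{0<..}"])
       (use assms in \<open>auto simp: poly_exp_recip_def\<close>)
qed

lemma poly_exp_recip_deriv_neg:
  assumes "x < 0"
  shows "(poly_exp_recip P has_real_derivative poly_exp_recip (poly_exp_recip_step P) x) (at x)"
proof -
  have "((\<lambda>x. 0) has_real_derivative 0) (at x)" by simp
  then have "(poly_exp_recip P has_real_derivative 0) (at x)"
    by (rule has_field_derivative_transform_within_open[of _ _ _ "{..<0}"])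
       (use assms in \<open>auto simp: poly_exp_recip_def\<close>)
  then show ?thesis using assms by (simp add: poly_exp_recip_def)
qed

lemma poly_exp_recip_deriv_0:
  "(poly_exp_recip P has_real_derivative poly_exp_recip (poly_exp_recip_step P) 0) (at 0)"
proof -
  have "((\<lambda>h. (poly_exp_recip P (0 + h) - poly_exp_recip P 0) / h) \<longlongrightarrow> 0) (at 0)"
    unfolding filterlim_at_split
  proof
    show "((\<lambda>h. (poly_exp_recip P (0 + h) - poly_exp_recip P 0) / h) \<longlongrightarrow> 0) (at_left 0)"
    proof (rule tendsto_cong[THEN iffD1, of "\<lambda>h. 0"])
      show "\<forall>\<^sub>F x in at_left 0. 0 = (poly_exp_recip P (0 + x) - poly_exp_recip P 0) / x"
        unfolding eventually_at_left_field
        by (intro exI[of _ "-1"]) (auto simp: poly_exp_recip_def)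
    qed simp
  next
    have lim: "((\<lambda>h. poly ([:0,1:] * P) (inverse h) * exp (- inverse h)) \<longlongrightarrow> 0) (at_right 0)"
      by (rule filterlim_compose[OF tendsto_poly_mult_exp_neg_at_top filterlim_inverse_at_top_right])
    show "((\<lambda>h. (poly_exp_recip P (0 + h) - poly_exp_recip P 0) / h) \<longlongrightarrow> 0) (at_right 0)"
    proof (rule tendsto_cong[THEN iffD1, OF _ lim])
      show "\<forall>\<^sub>F x in at_right 0. poly ([:0,1:] * P) (inverse x) * exp (- inverse x) = (poly_exp_recip P (0 + x) - poly_exp_recip P 0) / x"
        unfolding eventually_at_right_field
        by (intro exI[of _ 1]) (auto simp: poly_exp_recip_def field_simps)
    qed
  qed
  then show ?thesis unfolding DERIV_def by (simp add: poly_exp_recip_def)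
qed

lemma poly_exp_recip_deriv:
  "(poly_exp_recip P has_real_derivative poly_exp_recip (poly_exp_recip_step P) x) (at x)"
  using poly_exp_recip_deriv_pos poly_exp_recip_deriv_neg poly_exp_recip_deriv_0
  by (cases x "0::real" rule: linorder_cases) auto

lemma higher_deriv_poly_exp_recip:
  "(deriv ^^ n) (poly_exp_recip P) = poly_exp_recip ((poly_exp_recip_step ^^ n) P)"
proof (induction n arbitrary: P)
  case 0 then show ?case by simp
next
  case (Suc n)
  have "deriv (poly_exp_recip P) = poly_exp_recip (poly_exp_recip_step P)"
    by (intro ext DERIV_imp_deriv poly_exp_recip_deriv)
  then show ?case by (simp add: Suc.IH funpow_Suc_right)
qed

lemma smooth_poly_exp_recip: "smooth (poly_exp_recip P)"
  unfolding smooth_def higher_deriv_poly_exp_recip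
  using poly_exp_recip_deriv real_differentiable_def by blast

definition bump :: "real \<Rightarrow> real \<Rightarrow> real \<Rightarrow> real" where
  "bump a b x = poly_exp_recip 1 (x - a) * poly_exp_recip 1 (b - x)"

lemma smooth_bump: "smooth (bump a b)"
proof -
  have "smooth (\<lambda>x. (1 * poly_exp_recip 1 (1 * x + - a)) * (1 * poly_exp_recip 1 ((-1) * x + b)))"
    by (rule smooth_mult; rule smooth_affine[OF smooth_poly_exp_recip])
  then show ?thesis unfolding bump_def by simp
qed

lemma bump_pos: "a < x \<Longrightarrow> x < b \<Longrightarrow> bump a b x > 0"
  by (simp add: bump_def poly_exp_recip_def)

lemma bump_nonneg: "bump a b x \<ge> 0"
  by (simp add: bump_def poly_exp_recip_def)

lemma bump_eq_0: "x \<notin> {a<..<b} \<Longrightarrow> bump a b x = 0"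
  by (auto simp: bump_def poly_exp_recip_def)

lemma test_fun_iff:
  "test_fun L \<psi> \<longleftrightarrow> smooth \<psi> \<and> (\<exists>a b. 0 < a \<and> a < b \<and> b < L \<and> (\<forall>x. x \<notin> {a..b} \<longrightarrow> \<psi> x = 0))"
  unfolding test_fun_def smooth_def ..

lemma test_fun_bump:
  assumes "0 < a" "a < b" "b < L"
  shows "test_fun L (bump a b)"
proof -
  have "\<forall>x. x \<notin> {a..b} \<longrightarrow> bump a b x = 0" by (auto intro!: bump_eq_0)
  then show ?thesis unfolding test_fun_iff using smooth_bump assms by blast
qed

lemma test_fun_smooth: "test_fun L \<psi> \<Longrightarrow> smooth \<psi>"
  by (simp add: test_fun_iff)

lemma test_fun_support:
  "test_fun L \<psi> \<Longrightarrow> \<exists>a b. 0 < a \<and> a < b \<and> b < L \<and> (\<forall>x. x \<notin> {a..b} \<longrightarrow> \<psi> x = 0)"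
  by (simp add: test_fun_iff)

lemma test_fun_add:
  assumes "test_fun L \<phi>" "test_fun L \<psi>"
  shows "test_fun L (\<lambda>x. \<phi> x + \<psi> x)"
proof -
  obtain a1 b1 where 1: "0 < a1" "a1 < b1" "b1 < L" "\<forall>x. x \<notin> {a1..b1} \<longrightarrow> \<phi> x = 0"
    using test_fun_support[OF assms(1)] by blast
  obtain a2 b2 where 2: "0 < a2" "a2 < b2" "b2 < L" "\<forall>x. x \<notin> {a2..b2} \<longrightarrow> \<psi> x = 0"
    using test_fun_support[OF assms(2)] by blast
  have "\<forall>x. x \<notin> {min a1 a2..max b1 b2} \<longrightarrow> \<phi> x + \<psi> x = 0"
  proof (intro allI impI)
    fix x assume "x \<notin> {min a1 a2..max b1 b2}"
    then have "x \<notin> {a1..b1}" "x \<notin> {a2..b2}" by auto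
    then show "\<phi> x + \<psi> x = 0" using 1(4) 2(4) by simp
  qed
  moreover have "0 < min a1 a2" "min a1 a2 < max b1 b2" "max b1 b2 < L" using 1 2 by auto
  ultimately show ?thesis unfolding test_fun_iff
    using smooth_add[OF test_fun_smooth[OF assms(1)] test_fun_smooth[OF assms(2)]] by blast
qed

lemma test_fun_cmult:
  assumes "test_fun L \<phi>"
  shows "test_fun L (\<lambda>x. c * \<phi> x)"
proof -
  obtain a1 b1 where 1: "0 < a1" "a1 < b1" "b1 < L" "\<forall>x. x \<notin> {a1..b1} \<longrightarrow> \<phi> x = 0"
    using test_fun_support[OF assms(1)] by blast
  have "\<forall>x. x \<notin> {a1..b1} \<longrightarrow> c * \<phi> x = 0" using 1(4) by auto
  then show ?thesis unfolding test_fun_iff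
    using smooth_cmult[OF test_fun_smooth[OF assms(1)]] 1 by blast
qed

lemma test_fun_diff:
  assumes "test_fun L \<phi>" "test_fun L \<psi>"
  shows "test_fun L (\<lambda>x. \<phi> x - \<psi> x)"
  using test_fun_add[OF assms(1) test_fun_cmult[OF assms(2), of "-1"]] by simp

lemma test_fun_continuous_on: "test_fun L \<psi> \<Longrightarrow> continuous_on S \<psi>"
  using smooth_continuous_on test_fun_smooth by blast

lemma test_fun_deriv_continuous_on: "test_fun L \<psi> \<Longrightarrow> continuous_on S (deriv \<psi>)"
  using smooth_continuous_on smooth_deriv test_fun_smooth by blast

lemma test_fun_boundary:
  assumes "test_fun L \<psi>"
  shows "\<psi> 0 = 0" "\<psi> L = 0"
  using test_fun_support[OF assms] by force+

lemma integral_deriv_test_fun: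
  assumes "test_fun L \<psi>" "0 \<le> x"
  shows "integral {0..x} (deriv \<psi>) = \<psi> x"
proof -
  have "(deriv \<psi> has_integral \<psi> x - \<psi> 0) {0..x}"
    using assms(2)
    by (intro fundamental_theorem_of_calculus)
       (auto simp: has_real_derivative_iff_has_vector_derivative[symmetric]
             intro: has_field_derivative_at_within smooth_has_real_derivative test_fun_smooth[OF assms(1)])
  then show ?thesis using test_fun_boundary[OF assms(1)] by (simp add: integral_unique)
qed

lemma integrable_pair_lborel_mult_less:
  fixes A B :: "real \<Rightarrow> real"
  assumes A: "integrable lborel A" and B: "integrable lborel B"
  shows "integrable (lborel \<Otimes>\<^sub>M lborel) (\<lambda>(x, y). if y < x then A x * B y else 0)"
proof -
  have [measurable]: "A \<in> borel_measurable lborel" "B \<in> borel_measurable lborel"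
    using A B by auto
  define f where "f = (\<lambda>x y. if y < x then A x * B y else (0::real))"
  have fm[measurable]: "(\<lambda>(x, y). f x y) \<in> borel_measurable (lborel \<Otimes>\<^sub>M lborel)"
    unfolding f_def by measurable
  have iy: "integrable lborel (\<lambda>y. f x y)" for x
  proof (rule Bochner_Integration.integrable_bound[of _ "\<lambda>y. \<bar>A x\<bar> * \<bar>B y\<bar>"])
    show "integrable lborel (\<lambda>y. \<bar>A x\<bar> * \<bar>B y\<bar>)" using B by auto
    show "(\<lambda>y. f x y) \<in> borel_measurable lborel" unfolding f_def by measurable
    show "AE y in lborel. norm (f x y) \<le> norm (\<bar>A x\<bar> * \<bar>B y\<bar>)"
      by (auto simp: f_def abs_mult)
  qed
  have bound: "norm (LINT y|lborel. norm (f x y)) \<le> norm (\<bar>A x\<bar> * (\<integral>y. \<bar>B y\<bar> \<partial>lborel))" for x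
  proof -
    have "(LINT y|lborel. norm (f x y)) \<le> (LINT y|lborel. \<bar>A x\<bar> * \<bar>B y\<bar>)"
      by (rule integral_mono) (use iy B in \<open>auto simp: f_def abs_mult\<close>)
    then show ?thesis by simp
  qed
  have "integrable (lborel \<Otimes>\<^sub>M lborel) (\<lambda>(x, y). f x y)"
  proof (rule lborel_pair.Fubini_integrable[OF fm])
    show "AE x in lborel. integrable lborel (\<lambda>y. case (x, y) of (x, y) \<Rightarrow> f x y)"
      using iy by simp
    show "integrable lborel (\<lambda>x. LINT y|lborel. norm (case (x, y) of (x, y) \<Rightarrow> f x y))"
      by (rule Bochner_Integration.integrable_bound[of _ "\<lambda>x. \<bar>A x\<bar> * (\<integral>y. \<bar>B y\<bar> \<partial>lborel)"])
         (use A bound in auto)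
  qed
  then show ?thesis by (simp add: f_def)
qed

lemma integral_mult_integral_less_swap:
  fixes A B :: "real \<Rightarrow> real"
  assumes A: "integrable lborel A" and B: "integrable lborel B"
  shows "(\<integral>x. A x * (\<integral>y. (if y < x then B y else 0) \<partial>lborel) \<partial>lborel)
       = (\<integral>y. B y * (\<integral>x. (if y < x then A x else 0) \<partial>lborel) \<partial>lborel)"
proof -
  define f where "f = (\<lambda>x y. if y < x then A x * B y else (0::real))"
  have "(\<integral>y. (\<integral>x. f x y \<partial>lborel) \<partial>lborel) = (\<integral>x. (\<integral>y. f x y \<partial>lborel) \<partial>lborel)"
    using lborel_pair.Fubini_integral[OF integrable_pair_lborel_mult_less[OF A B]]
    unfolding f_def by (simp only: split_def fst_conv snd_conv)
  moreover have "(\<integral>x. f x y \<partial>lborel) = B y * (\<integral>x. (if y < x then A x else 0) \<partial>lborel)" for y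
  proof -
    have "(\<integral>x. f x y \<partial>lborel) = (\<integral>x. B y * (if y < x then A x else 0) \<partial>lborel)"
      by (rule Bochner_Integration.integral_cong) (auto simp: f_def)
    then show ?thesis by simp
  qed
  moreover have "(\<integral>y. f x y \<partial>lborel) = A x * (\<integral>y. (if y < x then B y else 0) \<partial>lborel)" for x
  proof -
    have "(\<integral>y. f x y \<partial>lborel) = (\<integral>y. A x * (if y < x then B y else 0) \<partial>lborel)"
      by (rule Bochner_Integration.integral_cong) (auto simp: f_def)
    then show ?thesis by simp
  qed
  ultimately show ?thesis by simp
qed

lemma abs_integral_if_le_integral_abs:
  fixes A :: "real \<Rightarrow> real"
  assumes "integrable lborel A" and [measurable]: "Measurable.pred lborel P"
  shows "\<bar>\<integral>x. (if P x then A x else 0) \<partial>lborel\<bar> \<le> (\<integral>x. \<bar>A x\<bar> \<partial>lborel)"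
proof -
  have [measurable]: "A \<in> borel_measurable lborel" using assms by auto
  have "\<bar>\<integral>x. (if P x then A x else 0) \<partial>lborel\<bar> \<le> (\<integral>x. \<bar>if P x then A x else 0\<bar> \<partial>lborel)"
    by (rule integral_abs_bound)
  also have "\<dots> \<le> (\<integral>x. \<bar>A x\<bar> \<partial>lborel)"
  proof (rule integral_mono)
    show "integrable lborel (\<lambda>x. \<bar>A x\<bar>)" using assms by auto
    show "integrable lborel (\<lambda>x. \<bar>if P x then A x else 0\<bar>)"
      by (rule Bochner_Integration.integrable_bound[of _ "\<lambda>x. \<bar>A x\<bar>"]) (use assms in \<open>auto\<close>)
  qed auto
  finally show ?thesis .
qed

lemma integral_if_le_eq_integral_if_less:
  fixes A :: "real \<Rightarrow> real"
  assumes [measurable]: "A \<in> borel_measurable lborel"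
  shows "(\<integral>y. (if y \<le> x then A y else 0) \<partial>lborel) = (\<integral>y. (if y < x then A y else 0) \<partial>lborel)"
proof (rule integral_cong_AE)
  show "AE y in lborel. (if y \<le> x then A y else 0) = (if y < x then A y else 0)"
    using AE_lborel_singleton[of x] by eventually_elim auto
qed measurable

definition primitive :: "(real \<Rightarrow> real) \<Rightarrow> real \<Rightarrow> real" where
  "primitive a x = (LINT y:{0..x}|lborel. a y)"

lemma primitive_0: "primitive a 0 = 0"
  unfolding primitive_def set_lebesgue_integral_def
  by (rule integral_eq_zero_AE) (use AE_lborel_singleton[of 0] in \<open>eventually_elim, auto\<close>)

lemma primitive_L: "primitive a L = integral\<^sup>L (lborel_Icc L) a"
  unfolding primitive_def set_integral_eq_lborel_Icc ..

lemma primitive_eq_integral_if: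
  assumes "0 \<le> x" "x \<le> L"
  shows "primitive a x = (\<integral>y. (if y \<le> x then indicator {0..L} y * a y else 0) \<partial>lborel)"
  unfolding primitive_def set_lebesgue_integral_def
  by (rule Bochner_Integration.integral_cong) (use assms in \<open>auto simp: indicator_def\<close>)

lemma primitive_eq_integral_indicator:
  assumes "x \<in> {0..L}"
  shows "primitive a x = integral\<^sup>L (lborel_Icc L) (\<lambda>y. indicator {0..x} y * a y)"
  unfolding primitive_def integral_lborel_Icc_indicator set_lebesgue_integral_def
  by (rule Bochner_Integration.integral_cong) (use assms in \<open>auto simp: indicator_def\<close>)

lemma primitive_eq_integral:
  assumes "integrable (lborel_Icc L) a" "x \<in> {0..L}"
  shows "primitive a x = integral {0..x} a"
proof -
  have "set_integrable lborel {0..L} a" using assms(1) set_integrable_iff_lborel_Icc by blast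
  then have "set_integrable lborel {0..x} a" by (rule set_integrable_subset) (use assms in auto)
  then show ?thesis unfolding primitive_def by (rule set_borel_integral_eq_integral(2))
qed

lemma continuous_on_primitive:
  assumes "integrable (lborel_Icc L) a"
  shows "continuous_on {0..L} (primitive a)"
proof -
  have "set_integrable lborel {0..L} a" using assms set_integrable_iff_lborel_Icc by blast
  then have "a integrable_on {0..L}" by (rule set_borel_integral_eq_integral(1))
  then have "continuous_on {0..L} (\<lambda>x. integral {0..x} a)" by (rule indefinite_integral_continuous_1)
  then show ?thesis by (rule continuous_on_eq) (use primitive_eq_integral[OF assms] in auto)
qed

lemma primitive_measurable:
  "integrable (lborel_Icc L) a \<Longrightarrow> primitive a \<in> borel_measurable (lborel_Icc L)"
  by (rule borel_measurable_lborel_Icc_continuous_on[OF continuous_on_primitive])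

lemma integral_mult_integral_le_add_less:
  fixes A B :: "real \<Rightarrow> real"
  assumes iA: "integrable lborel A" and iB: "integrable lborel B"
  shows "(\<integral>x. B x * (\<integral>y. (if y \<le> x then A y else 0) \<partial>lborel) \<partial>lborel)
       + (\<integral>x. A x * (\<integral>y. (if y < x then B y else 0) \<partial>lborel) \<partial>lborel)
       = (\<integral>x. A x \<partial>lborel) * (\<integral>x. B x \<partial>lborel)"
proof -
  have [measurable]: "A \<in> borel_measurable lborel" "B \<in> borel_measurable lborel"
    using iA iB by auto
  define Ga where "Ga = (\<lambda>y. \<integral>x. (if x \<le> y then A x else 0) \<partial>lborel)"
  define Ha where "Ha = (\<lambda>y. \<integral>x. (if y < x then A x else 0) \<partial>lborel)"
  have [measurable]: "Ga \<in> borel_measurable lborel" "Ha \<in> borel_measurable lborel"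
    unfolding Ga_def Ha_def by measurable
  have "\<bar>Ga y\<bar> \<le> (\<integral>x. \<bar>A x\<bar> \<partial>lborel)" "\<bar>Ha y\<bar> \<le> (\<integral>x. \<bar>A x\<bar> \<partial>lborel)" for y
    unfolding Ga_def Ha_def by (rule abs_integral_if_le_integral_abs[OF iA], measurable)+
  then have iBGa: "integrable lborel (\<lambda>y. B y * Ga y)" and iBHa: "integrable lborel (\<lambda>y. B y * Ha y)"
    by (auto intro!: integrable_mult_bounded[OF iB])
  have GaHa: "Ga y + Ha y = (\<integral>x. A x \<partial>lborel)" for y
  proof -
    have "Ga y + Ha y = (\<integral>x. (if x \<le> y then A x else 0) + (if y < x then A x else 0) \<partial>lborel)"
      unfolding Ga_def Ha_def
      by (rule Bochner_Integration.integral_add[symmetric])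
         (auto intro!: Bochner_Integration.integrable_bound[OF integrable_abs[OF iA]])
    also have "\<dots> = (\<integral>x. A x \<partial>lborel)"
      by (rule Bochner_Integration.integral_cong) auto
    finally show ?thesis .
  qed
  have "(\<integral>x. A x * (\<integral>y. (if y < x then B y else 0) \<partial>lborel) \<partial>lborel) = (\<integral>y. B y * Ha y \<partial>lborel)"
    unfolding Ha_def by (rule integral_mult_integral_less_swap[OF iA iB])
  then have "(\<integral>x. B x * (\<integral>y. (if y \<le> x then A y else 0) \<partial>lborel) \<partial>lborel)
       + (\<integral>x. A x * (\<integral>y. (if y < x then B y else 0) \<partial>lborel) \<partial>lborel)
       = (\<integral>y. B y * Ga y + B y * Ha y \<partial>lborel)"
    using iBGa iBHa by (simp add: Ga_def)
  also have "\<dots> = (\<integral>y. B y * (\<integral>x. A x \<partial>lborel) \<partial>lborel)"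
    by (simp add: GaHa flip: distrib_left)
  finally show ?thesis by simp
qed

lemma integral_primitive_mult_add:
  fixes a b :: "real \<Rightarrow> real"
  assumes L: "0 \<le> L" and ia: "integrable (lborel_Icc L) a" and ib: "integrable (lborel_Icc L) b"
  shows "integral\<^sup>L (lborel_Icc L) (\<lambda>x. primitive a x * b x)
       + integral\<^sup>L (lborel_Icc L) (\<lambda>x. a x * primitive b x) = primitive a L * primitive b L"
proof -
  define A where "A = (\<lambda>y. indicator {0..L} y * a y)"
  define B where "B = (\<lambda>y. indicator {0..L} y * b y)"
  have iA: "integrable lborel A" and iB: "integrable lborel B"
    using ia ib unfolding A_def B_def integrable_lborel_Icc_indicator .
  have [measurable]: "B \<in> borel_measurable lborel" using iB by auto
  have "integral\<^sup>L (lborel_Icc L) (\<lambda>x. primitive a x * b x)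
      = (\<integral>x. B x * (\<integral>y. (if y \<le> x then A y else 0) \<partial>lborel) \<partial>lborel)"
    unfolding integral_lborel_Icc_indicator
  proof (rule Bochner_Integration.integral_cong[OF refl])
    fix x
    show "indicator {0..L} x * (primitive a x * b x) = B x * (\<integral>y. (if y \<le> x then A y else 0) \<partial>lborel)"
    proof (cases "x \<in> {0..L}")
      case True
      then have "primitive a x = (\<integral>y. (if y \<le> x then A y else 0) \<partial>lborel)"
        unfolding A_def by (subst primitive_eq_integral_if[of x L]) auto
      then show ?thesis unfolding B_def by simp
    qed (simp add: B_def)
  qed
  moreover have "integral\<^sup>L (lborel_Icc L) (\<lambda>x. a x * primitive b x)
      = (\<integral>x. A x * (\<integral>y. (if y \<le> x then B y else 0) \<partial>lborel) \<partial>lborel)"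
    unfolding integral_lborel_Icc_indicator
  proof (rule Bochner_Integration.integral_cong[OF refl])
    fix x
    show "indicator {0..L} x * (a x * primitive b x) = A x * (\<integral>y. (if y \<le> x then B y else 0) \<partial>lborel)"
    proof (cases "x \<in> {0..L}")
      case True
      then have "primitive b x = (\<integral>y. (if y \<le> x then B y else 0) \<partial>lborel)"
        unfolding B_def by (subst primitive_eq_integral_if[of x L]) auto
      then show ?thesis unfolding A_def by simp
    qed (simp add: A_def)
  qed
  moreover have "(\<lambda>x. A x * (\<integral>y. (if y \<le> x then B y else 0) \<partial>lborel))
      = (\<lambda>x. A x * (\<integral>y. (if y < x then B y else 0) \<partial>lborel))"
    by (simp add: integral_if_le_eq_integral_if_less)
  ultimately show ?thesis
    using integral_mult_integral_le_add_less[OF iA iB]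
    by (simp add: primitive_L integral_lborel_Icc_indicator A_def B_def)
qed

lemma emeasure_density_integrable:
  fixes h :: "real \<Rightarrow> real"
  assumes ih: "integrable lborel h" and nn: "\<And>x. 0 \<le> h x" and A: "A \<in> sets borel"
  shows "emeasure (density lborel (\<lambda>x. ennreal (h x))) A = ennreal (\<integral>x. h x * indicator A x \<partial>lborel)"
proof -
  have [measurable]: "h \<in> borel_measurable lborel" using ih by auto
  have "emeasure (density lborel (\<lambda>x. ennreal (h x))) A = (\<integral>\<^sup>+ x. ennreal (h x) * indicator A x \<partial>lborel)"
    by (rule emeasure_density) (use A in auto)
  also have "\<dots> = (\<integral>\<^sup>+ x. ennreal (h x * indicator A x) \<partial>lborel)"
    by (rule nn_integral_cong) (simp split: split_indicator)
  also have "\<dots> = ennreal (\<integral>x. h x * indicator A x \<partial>lborel)"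
  proof (rule nn_integral_eq_integral)
    show "integrable lborel (\<lambda>x. h x * indicator A x)"
      using integrable_mult_indicator[of A lborel h] A ih by (simp add: mult.commute)
  qed (simp add: nn)
  finally show ?thesis .
qed

text \<open>The positive and negative parts of \<open>g\<close> are densities of two measures that agree on all
  rays \<open>{x<..}\<close>, hence everywhere.\<close>

lemma AE_zero_if_integral_greaterThan_zero:
  fixes g :: "real \<Rightarrow> real"
  assumes ig: "integrable lborel g" and z: "\<And>x. (\<integral>y. g y * indicator {x<..} y \<partial>lborel) = 0"
  shows "AE x in lborel. g x = 0"
proof -
  have [measurable]: "g \<in> borel_measurable lborel" using ig by auto
  define gp where "gp = (\<lambda>x. max 0 (g x))"
  define gn where "gn = (\<lambda>x. max 0 (- g x))"
  have igp: "integrable lborel gp" and ign: "integrable lborel gn"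
    unfolding gp_def gn_def using ig by auto
  have gpn: "g x = gp x - gn x" for x
    unfolding gp_def gn_def by auto
  have split_int: "(\<integral>x. gp x * indicator A x \<partial>lborel) - (\<integral>x. gn x * indicator A x \<partial>lborel)
        = (\<integral>x. g x * indicator A x \<partial>lborel)" if "A \<in> sets borel" for A
  proof -
    have "(\<integral>x. gp x * indicator A x \<partial>lborel) - (\<integral>x. gn x * indicator A x \<partial>lborel)
        = (\<integral>x. gp x * indicator A x - gn x * indicator A x \<partial>lborel)"
      by (rule Bochner_Integration.integral_diff[symmetric])
         (use integrable_mult_indicator[of A lborel gp] integrable_mult_indicator[of A lborel gn]
            that igp ign in \<open>auto simp: mult.commute\<close>)
    also have "\<dots> = (\<integral>x. g x * indicator A x \<partial>lborel)"
      by (rule Bochner_Integration.integral_cong) (auto simp: gpn left_diff_distrib)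
    finally show ?thesis .
  qed
  have emeasure_eq: "emeasure (density lborel (\<lambda>x. ennreal (gp x))) A
      = ennreal (\<integral>x. gp x * indicator A x \<partial>lborel)"
    "emeasure (density lborel (\<lambda>x. ennreal (gn x))) A
      = ennreal (\<integral>x. gn x * indicator A x \<partial>lborel)" if "A \<in> sets borel" for A
    using emeasure_density_integrable[OF igp _ that] emeasure_density_integrable[OF ign _ that]
    by (auto simp: gp_def gn_def)
  have dens: "density lborel (\<lambda>x. ennreal (gp x)) = density lborel (\<lambda>x. ennreal (gn x))"
  proof (rule measure_eqI_lessThan)
    fix x
    show "emeasure (density lborel (\<lambda>x. ennreal (gp x))) {x<..} < \<infinity>"
      by (simp add: emeasure_eq)
    show "emeasure (density lborel (\<lambda>x. ennreal (gp x))) {x<..}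
        = emeasure (density lborel (\<lambda>x. ennreal (gn x))) {x<..}"
      using split_int[of "{x<..}"] z[of x] by (simp add: emeasure_eq)
  qed simp_all
  have "set_lebesgue_integral lborel A g = 0" if "A \<in> sets lborel" for A
  proof -
    have A: "A \<in> sets borel" using that by simp
    have "ennreal (\<integral>x. gp x * indicator A x \<partial>lborel) = ennreal (\<integral>x. gn x * indicator A x \<partial>lborel)"
      using dens emeasure_eq[OF A] by metis
    moreover have "0 \<le> (\<integral>x. gp x * indicator A x \<partial>lborel)" "0 \<le> (\<integral>x. gn x * indicator A x \<partial>lborel)"
      by (auto intro!: integral_nonneg_AE simp: gp_def gn_def)
    ultimately have "(\<integral>x. g x * indicator A x \<partial>lborel) = 0"
      using split_int[OF A] by (simp add: ennreal_inj)
    then show ?thesis unfolding set_lebesgue_integral_def by (simp add: mult.commute)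
  qed
  then show ?thesis using density_unique_real[OF ig, of "\<lambda>x. 0"] by simp
qed

lemma AE_zero_if_primitive_zero:
  fixes k :: "real \<Rightarrow> real"
  assumes L: "0 \<le> L" and ik: "integrable (lborel_Icc L) k"
    and z: "\<And>x. x \<in> {0..L} \<Longrightarrow> primitive k x = 0"
  shows "AE x in lborel_Icc L. k x = 0"
proof -
  define g where "g = (\<lambda>x. indicator {0..L} x * k x)"
  have ig: "integrable lborel g" using ik unfolding g_def integrable_lborel_Icc_indicator .
  have int_le: "(\<integral>y. g y * indicator {..x} y \<partial>lborel) = 0" for x
  proof (cases "x < 0")
    case True
    then show ?thesis
      by (intro integral_eq_zero_AE AE_I2) (auto simp: g_def indicator_def)
  next
    case False
    have "(\<integral>y. g y * indicator {..x} y \<partial>lborel) = primitive k (min x L)"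
      unfolding primitive_def set_lebesgue_integral_def
      by (rule Bochner_Integration.integral_cong) (auto simp: g_def indicator_def)
    also have "\<dots> = 0" using False L by (intro z) auto
    finally show ?thesis .
  qed
  have "(\<integral>y. g y * indicator {x<..} y \<partial>lborel) = 0" for x
  proof -
    have "(\<integral>y. g y \<partial>lborel) = (\<integral>y. g y * indicator {..x} y + g y * indicator {x<..} y \<partial>lborel)"
      by (rule Bochner_Integration.integral_cong) (auto simp: indicator_def)
    also have "\<dots> = (\<integral>y. g y * indicator {..x} y \<partial>lborel) + (\<integral>y. g y * indicator {x<..} y \<partial>lborel)"
      by (rule Bochner_Integration.integral_add)
         (use integrable_mult_indicator[of _ lborel g] ig in \<open>auto simp: mult.commute\<close>)
    moreover have "(\<integral>y. g y \<partial>lborel) = 0"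
      using z[of L] L unfolding primitive_def set_lebesgue_integral_def g_def by simp
    ultimately show ?thesis using int_le[of x] by simp
  qed
  then have "AE x in lborel. g x = 0" by (rule AE_zero_if_integral_greaterThan_zero[OF ig])
  then have "AE x in lborel. x \<in> {0..L} \<longrightarrow> k x = 0"
    by eventually_elim (auto simp: g_def)
  then show ?thesis unfolding lborel_Icc_def by (subst AE_restrict_space_iff) auto
qed

lemma test_fun_integrable: "test_fun L \<eta> \<Longrightarrow> integrable (lborel_Icc L) \<eta>"
  using integrable_lborel_Icc_continuous_on test_fun_continuous_on by blast

lemma test_fun_support_open:
  assumes "test_fun L \<psi>"
  shows "\<exists>a b. 0 < a \<and> a < b \<and> b < L \<and> (\<forall>x. (x \<le> a \<or> b \<le> x) \<longrightarrow> \<psi> x = 0)"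
proof -
  obtain a b where ab: "0 < a" "a < b" "b < L" "\<forall>x. x \<notin> {a..b} \<longrightarrow> \<psi> x = 0"
    using test_fun_support[OF assms] by blast
  show ?thesis
    using ab by (intro exI[of _ "a/2"] exI[of _ "(b+L)/2"]) auto
qed

lemma primitive_deriv_test_fun:
  assumes "test_fun L \<eta>" "x \<in> {0..L}"
  shows "primitive (deriv \<eta>) x = \<eta> x"
  using primitive_eq_integral[OF integrable_lborel_Icc_continuous_on[OF test_fun_deriv_continuous_on[OF assms(1)]] assms(2)]
    integral_deriv_test_fun[OF assms(1)] assms(2)
  by simp

lemma has_real_derivative_integral_upto:
  fixes \<zeta> :: "real \<Rightarrow> real"
  assumes cont: "\<And>S. continuous_on S \<zeta>" and a: "0 < a" and zero: "\<And>x. x \<le> a \<Longrightarrow> \<zeta> x = 0"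
  shows "((\<lambda>x. integral {0..x} \<zeta>) has_real_derivative \<zeta> x) (at x)"
proof (cases "x > 0")
  case True
  have "((\<lambda>x. integral {0..x} \<zeta>) has_real_derivative \<zeta> x) (at x within {0..x+1})"
    by (rule integral_has_real_derivative) (use cont True in auto)
  moreover have "at x within {0..x+1} = at x"
    by (rule at_within_interior) (use True in auto)
  ultimately show ?thesis by simp
next
  case False
  have low: "integral {0..y} \<zeta> = 0" if "y \<le> a" for y
  proof -
    have "integral {0..y} \<zeta> = integral {0..y} (\<lambda>_. 0)"
      by (rule Henstock_Kurzweil_Integration.integral_cong) (use zero that in auto)
    then show ?thesis by simp
  qed
  have "((\<lambda>_. 0) has_real_derivative 0) (at x)" by simp
  then have "((\<lambda>x. integral {0..x} \<zeta>) has_real_derivative 0) (at x)"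
    by (rule has_field_derivative_transform_within_open[of _ _ _ "{..<a}"])
       (use False a low in auto)
  moreover have "\<zeta> x = 0" using False a zero by auto
  ultimately show ?thesis by simp
qed

lemma test_fun_integral_upto:
  assumes z: "test_fun L \<zeta>" and m: "integral\<^sup>L (lborel_Icc L) \<zeta> = 0"
  shows "test_fun L (\<lambda>x. integral {0..x} \<zeta>)"
proof -
  obtain a b where ab: "0 < a" "a < b" "b < L" "\<forall>x. (x \<le> a \<or> b \<le> x) \<longrightarrow> \<zeta> x = 0"
    using test_fun_support_open[OF z] by blast
  have cz: "continuous_on S \<zeta>" for S using test_fun_continuous_on[OF z] .
  have izo: "\<zeta> integrable_on {c..d}" for c d by (rule integrable_continuous_interval[OF cz])
  have vanish: "integral {c..d} \<zeta> = 0" if "d \<le> a \<or> b \<le> c" for c d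
  proof -
    have "integral {c..d} \<zeta> = integral {c..d} (\<lambda>_. 0)"
      by (rule Henstock_Kurzweil_Integration.integral_cong) (use ab that in auto)
    then show ?thesis by simp
  qed
  have "integral {0..b} \<zeta> + integral {b..L} \<zeta> = integral {0..L} \<zeta>"
    by (rule Henstock_Kurzweil_Integration.integral_combine) (use ab izo in auto)
  then have zero_upto_b: "integral {0..b} \<zeta> = 0"
    using m vanish[where c = b and d = L] integral_lborel_Icc_eq_integral[OF cz] by simp
  have "integral {0..x} \<zeta> = 0" if "x \<notin> {a..b}" for x
  proof (cases "x \<le> a")
    case True
    then show ?thesis using vanish by simp
  next
    case False
    then have "integral {0..b} \<zeta> + integral {b..x} \<zeta> = integral {0..x} \<zeta>"
      by (intro Henstock_Kurzweil_Integration.integral_combine) (use that ab izo in auto)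
    then show ?thesis using zero_upto_b vanish[where c = b and d = x] by simp
  qed
  moreover have "smooth (\<lambda>x. integral {0..x} \<zeta>)"
  proof (rule smoothI[OF _ test_fun_smooth[OF z]])
    show "((\<lambda>x. integral {0..x} \<zeta>) has_real_derivative \<zeta> x) (at x)" for x
      by (rule has_real_derivative_integral_upto[OF cz ab(1)]) (use ab in auto)
  qed
  ultimately show ?thesis unfolding test_fun_iff using ab by blast
qed

lemma deriv_test_fun_integral_upto:
  assumes "test_fun L \<zeta>"
  shows "deriv (\<lambda>x. integral {0..x} \<zeta>) = \<zeta>"
proof
  fix x
  obtain a b where "0 < a" "\<forall>x. (x \<le> a \<or> b \<le> x) \<longrightarrow> \<zeta> x = 0"
    using test_fun_support_open[OF assms] by blast
  then have "((\<lambda>x. integral {0..x} \<zeta>) has_real_derivative \<zeta> x) (at x)"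
    by (intro has_real_derivative_integral_upto test_fun_continuous_on[OF assms]) auto
  then show "deriv (\<lambda>x. integral {0..x} \<zeta>) x = \<zeta> x" by (rule DERIV_imp_deriv)
qed

lemma integral_lborel_Icc_pos:
  fixes f :: "real \<Rightarrow> real"
  assumes L: "0 < L" and cf: "continuous_on {0..L} f" and nn: "\<And>x. x \<in> {0..L} \<Longrightarrow> 0 \<le> f x"
    and x0: "x0 \<in> {0..L}" "0 < f x0"
  shows "0 < integral\<^sup>L (lborel_Icc L) f"
proof -
  have "integral {0..L} f \<noteq> 0"
    using integral_eq_0_iff[OF cf L nn] x0 by auto
  moreover have "integral {0..L} f \<ge> 0"
    by (rule integral_nonneg) (use integrable_continuous_interval[OF cf] nn in auto)
  ultimately show ?thesis using integral_lborel_Icc_eq_integral[OF cf] by simp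
qed

lemma test_fun_with_integral_1:
  assumes L: "0 < L"
  shows "\<exists>\<psi>. test_fun L \<psi> \<and> integral\<^sup>L (lborel_Icc L) \<psi> = 1"
proof -
  have tb: "test_fun L (bump (L/3) (2*L/3))" by (rule test_fun_bump) (use L in auto)
  define I where "I = integral\<^sup>L (lborel_Icc L) (bump (L/3) (2*L/3))"
  have "0 < I"
    unfolding I_def
  proof (rule integral_lborel_Icc_pos[of _ _ "L/2"])
    show "continuous_on {0..L} (bump (L/3) (2*L/3))" by (rule test_fun_continuous_on[OF tb])
    show "0 \<le> bump (L/3) (2*L/3) x" for x by (rule bump_nonneg)
    show "0 < bump (L/3) (2*L/3) (L/2)" by (rule bump_pos) (use L in auto)
  qed (use L in auto)
  then have "integral\<^sup>L (lborel_Icc L) (\<lambda>x. (1/I) * bump (L/3) (2*L/3) x) = 1"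
    by (simp add: I_def)
  then show ?thesis using test_fun_cmult[OF tb] by blast
qed

lemma orthogonal_mean_zero_test_funs:
  fixes F :: "real \<Rightarrow> real"
  assumes L: "0 < L" and iF: "integrable (lborel_Icc L) F"
    and h: "\<And>\<zeta>. test_fun L \<zeta> \<Longrightarrow> integral\<^sup>L (lborel_Icc L) \<zeta> = 0 \<Longrightarrow>
      integral\<^sup>L (lborel_Icc L) (\<lambda>x. F x * \<zeta> x) = 0"
  shows "\<exists>c. \<forall>\<eta>. test_fun L \<eta> \<longrightarrow> integral\<^sup>L (lborel_Icc L) (\<lambda>x. (F x - c) * \<eta> x) = 0"
proof -
  obtain \<psi> where \<psi>: "test_fun L \<psi>" "integral\<^sup>L (lborel_Icc L) \<psi> = 1"
    using test_fun_with_integral_1[OF L] by blast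
  define c where "c = integral\<^sup>L (lborel_Icc L) (\<lambda>x. F x * \<psi> x)"
  have "integral\<^sup>L (lborel_Icc L) (\<lambda>x. (F x - c) * \<eta> x) = 0" if t: "test_fun L \<eta>" for \<eta>
  proof -
    define m where "m = integral\<^sup>L (lborel_Icc L) \<eta>"
    have i\<eta>: "integrable (lborel_Icc L) \<eta>" and i\<psi>: "integrable (lborel_Icc L) \<psi>"
      using test_fun_integrable t \<psi> by auto
    have iF\<eta>: "integrable (lborel_Icc L) (\<lambda>x. F x * \<eta> x)"
      by (rule integrable_mult_continuous_on[OF iF test_fun_continuous_on[OF t]])
    have iF\<psi>: "integrable (lborel_Icc L) (\<lambda>x. F x * \<psi> x)"
      by (rule integrable_mult_continuous_on[OF iF test_fun_continuous_on[OF \<psi>(1)]])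
    have "test_fun L (\<lambda>x. \<eta> x - m * \<psi> x)" by (rule test_fun_diff[OF t test_fun_cmult[OF \<psi>(1)]])
    moreover have "integral\<^sup>L (lborel_Icc L) (\<lambda>x. \<eta> x - m * \<psi> x) = 0"
      using i\<eta> i\<psi> \<psi>(2) by (simp add: m_def)
    ultimately have "integral\<^sup>L (lborel_Icc L) (\<lambda>x. F x * (\<eta> x - m * \<psi> x)) = 0" by (rule h)
    then have "integral\<^sup>L (lborel_Icc L) (\<lambda>x. F x * \<eta> x) = m * c"
      using iF\<eta> iF\<psi> by (simp add: c_def right_diff_distrib mult.left_commute)
    moreover have "integral\<^sup>L (lborel_Icc L) (\<lambda>x. (F x - c) * \<eta> x)
        = integral\<^sup>L (lborel_Icc L) (\<lambda>x. F x * \<eta> x) - c * m"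
      unfolding m_def using iF\<eta> i\<eta> by (simp add: left_diff_distrib)
    ultimately show ?thesis by simp
  qed
  then show ?thesis by blast
qed

lemma test_fun_integral_pos:
  fixes K :: "real \<Rightarrow> real"
  assumes L: "0 < L" and cK: "continuous_on {0..L} K" and x0: "x0 \<in> {0<..<L}" and pos: "K x0 > 0"
  shows "\<exists>\<eta>. test_fun L \<eta> \<and> integral\<^sup>L (lborel_Icc L) (\<lambda>x. K x * \<eta> x) > 0"
proof -
  have "x0 \<in> {0..L}" using x0 by auto
  then obtain \<delta> where d: "\<delta> > 0" "\<forall>y\<in>{0..L}. dist y x0 < \<delta> \<longrightarrow> dist (K y) (K x0) < K x0 / 2"
    using cK pos unfolding continuous_on_iff by (meson half_gt_zero)
  define a where "a = max (x0 - \<delta>/2) (x0/2)"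
  define b where "b = min (x0 + \<delta>/2) ((x0+L)/2)"
  have ab: "0 < a" "a < x0" "x0 < b" "b < L" using x0 d(1) unfolding a_def b_def
    by (auto simp: min_less_iff_disj less_max_iff_disj max_less_iff_conj)
  have Kp: "K y > 0" if "a < y" "y < b" for y
  proof -
    have "y \<in> {0..L}" "dist y x0 < \<delta>" using that ab unfolding a_def b_def dist_real_def by auto
    then have "\<bar>K y - K x0\<bar> < K x0 / 2" using d(2) by (simp add: dist_real_def)
    then show ?thesis by linarith
  qed
  have tb: "test_fun L (bump a b)" by (rule test_fun_bump) (use ab in auto)
  have "0 < integral\<^sup>L (lborel_Icc L) (\<lambda>x. K x * bump a b x)"
  proof (rule integral_lborel_Icc_pos[of _ _ x0])
    show "continuous_on {0..L} (\<lambda>x. K x * bump a b x)"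
      by (intro continuous_intros cK test_fun_continuous_on[OF tb])
    show "0 \<le> K x * bump a b x" for x
    proof (cases "a < x \<and> x < b")
      case True
      then show ?thesis using Kp[of x] bump_nonneg[of a b x] by simp
    next
      case False
      then show ?thesis using bump_eq_0[of x a b] by simp
    qed
    show "0 < K x0 * bump a b x0" using Kp[of x0] bump_pos[of a x0 b] ab by simp
  qed (use L x0 in auto)
  then show ?thesis using tb by blast
qed

lemma orthogonal_test_funs_imp_zero:
  fixes K :: "real \<Rightarrow> real"
  assumes L: "0 < L" and cK: "continuous_on {0..L} K"
    and h: "\<And>\<eta>. test_fun L \<eta> \<Longrightarrow> integral\<^sup>L (lborel_Icc L) (\<lambda>x. K x * \<eta> x) = 0"
    and x: "x \<in> {0..L}"
  shows "K x = 0"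
proof -
  have inner: "K x = 0" if xin: "x \<in> {0<..<L}" for x
  proof (rule ccontr)
    assume "K x \<noteq> 0"
    then consider "0 < K x" | "0 < - K x" by linarith
    then show False
    proof cases
      case 1
      then show False using test_fun_integral_pos[OF L cK xin] h by force
    next
      case 2
      moreover have "continuous_on {0..L} (\<lambda>x. - K x)" by (intro continuous_intros cK)
      ultimately obtain \<eta> where "test_fun L \<eta>" "integral\<^sup>L (lborel_Icc L) (\<lambda>x. - K x * \<eta> x) > 0"
        using test_fun_integral_pos[OF L _ xin] by blast
      then show False using h by simp
    qed
  qed
  have "x \<in> closure {0<..<L}" "continuous_on (closure {0<..<L}) K" using L x cK by auto
  then show "K x = 0" using continuous_constant_on_closure inner by blast
qed

lemma orthogonal_test_fun_derivs:
  fixes F :: "real \<Rightarrow> real"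
  assumes L: "0 < L" and iF: "integrable (lborel_Icc L) F"
    and h: "\<And>\<psi>. test_fun L \<psi> \<Longrightarrow> integral\<^sup>L (lborel_Icc L) (\<lambda>x. F x * deriv \<psi> x) = 0"
  shows "\<exists>c. \<forall>\<eta>. test_fun L \<eta> \<longrightarrow> integral\<^sup>L (lborel_Icc L) (\<lambda>x. (F x - c) * \<eta> x) = 0"
proof (rule orthogonal_mean_zero_test_funs[OF L iF])
  fix \<zeta> assume "test_fun L \<zeta>" "integral\<^sup>L (lborel_Icc L) \<zeta> = 0"
  then show "integral\<^sup>L (lborel_Icc L) (\<lambda>x. F x * \<zeta> x) = 0"
    using h[OF test_fun_integral_upto] deriv_test_fun_integral_upto by simp
qed

lemma integral_primitive_mult_deriv:
  fixes k :: "real \<Rightarrow> real"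
  assumes L: "0 \<le> L" and ik: "integrable (lborel_Icc L) k" and t: "test_fun L \<eta>"
  shows "integral\<^sup>L (lborel_Icc L) (\<lambda>x. primitive k x * deriv \<eta> x)
    = - integral\<^sup>L (lborel_Icc L) (\<lambda>x. k x * \<eta> x)"
proof -
  have "integral\<^sup>L (lborel_Icc L) (\<lambda>x. primitive k x * deriv \<eta> x)
      + integral\<^sup>L (lborel_Icc L) (\<lambda>x. k x * primitive (deriv \<eta>) x)
      = primitive k L * primitive (deriv \<eta>) L"
    by (rule integral_primitive_mult_add[OF L ik
          integrable_lborel_Icc_continuous_on[OF test_fun_deriv_continuous_on[OF t]]])
  moreover have "primitive (deriv \<eta>) L = 0"
    using primitive_deriv_test_fun[OF t, of L] test_fun_boundary[OF t] L by simp
  moreover have "integral\<^sup>L (lborel_Icc L) (\<lambda>x. k x * primitive (deriv \<eta>) x)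
      = integral\<^sup>L (lborel_Icc L) (\<lambda>x. k x * \<eta> x)"
    by (rule Bochner_Integration.integral_cong) (auto simp: primitive_deriv_test_fun[OF t])
  ultimately show ?thesis by simp
qed

lemma du_Bois_Reymond:
  fixes h :: "real \<Rightarrow> real"
  assumes L: "0 < L" and ih: "integrable (lborel_Icc L) h"
    and hz: "\<And>\<psi>. test_fun L \<psi> \<Longrightarrow> integral\<^sup>L (lborel_Icc L) (\<lambda>x. h x * deriv \<psi> x) = 0"
  shows "\<exists>c. AE x in lborel_Icc L. h x = c"
proof -
  obtain c where c: "\<And>\<eta>. test_fun L \<eta> \<Longrightarrow> integral\<^sup>L (lborel_Icc L) (\<lambda>x. (h x - c) * \<eta> x) = 0"
    using orthogonal_test_fun_derivs[OF L ih hz] by blast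
  define k where "k = (\<lambda>x. h x - c)"
  have ik: "integrable (lborel_Icc L) k" unfolding k_def using ih by auto
  have cK: "continuous_on {0..L} (primitive k)" by (rule continuous_on_primitive[OF ik])
  have "integral\<^sup>L (lborel_Icc L) (\<lambda>x. primitive k x * deriv \<eta> x) = 0" if "test_fun L \<eta>" for \<eta>
    using integral_primitive_mult_deriv[OF _ ik that] c[OF that] L by (simp add: k_def)
  then obtain d where d: "\<And>\<eta>. test_fun L \<eta> \<Longrightarrow>
      integral\<^sup>L (lborel_Icc L) (\<lambda>x. (primitive k x - d) * \<eta> x) = 0"
    using orthogonal_test_fun_derivs[OF L integrable_lborel_Icc_continuous_on[OF cK]] by blast
  have Kd: "primitive k x - d = 0" if "x \<in> {0..L}" for x
    by (rule orthogonal_test_funs_imp_zero[OF L _ d that]) (intro continuous_intros cK)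
  then have "primitive k x = 0" if "x \<in> {0..L}" for x
    using Kd[of 0] Kd[OF that] L by (simp add: primitive_0)
  then have "AE x in lborel_Icc L. k x = 0" by (intro AE_zero_if_primitive_zero) (use L ik in auto)
  then have "AE x in lborel_Icc L. h x = c" by eventually_elim (simp add: k_def)
  then show ?thesis by blast
qed

lemma weak_deriv_lborel_Icc:
  assumes "weak_deriv L u v"
  shows "integrable (lborel_Icc L) u" "integrable (lborel_Icc L) v"
    "\<And>\<psi>. test_fun L \<psi> \<Longrightarrow>
      integral\<^sup>L (lborel_Icc L) (\<lambda>x. u x * deriv \<psi> x) = - integral\<^sup>L (lborel_Icc L) (\<lambda>x. v x * \<psi> x)"
  using assms unfolding weak_deriv_def set_integrable_iff_lborel_Icc set_integral_eq_lborel_Icc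
  by auto

lemma weak_deriv_AE_primitive:
  assumes L: "0 < L" and wd: "weak_deriv L u v"
  shows "\<exists>c. AE x in lborel_Icc L. u x = c + primitive v x"
proof -
  note w = weak_deriv_lborel_Icc[OF wd]
  define h where "h = (\<lambda>x. u x - primitive v x)"
  have cV: "continuous_on {0..L} (primitive v)" by (rule continuous_on_primitive[OF w(2)])
  have ih: "integrable (lborel_Icc L) h"
    unfolding h_def using w(1) integrable_lborel_Icc_continuous_on[OF cV] by auto
  have "integral\<^sup>L (lborel_Icc L) (\<lambda>x. h x * deriv \<psi> x) = 0" if t: "test_fun L \<psi>" for \<psi>
  proof -
    have cd: "continuous_on {0..L} (deriv \<psi>)" by (rule test_fun_deriv_continuous_on[OF t])
    have "integrable (lborel_Icc L) (\<lambda>x. u x * deriv \<psi> x)"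
      by (rule integrable_mult_continuous_on[OF w(1) cd])
    moreover have "integrable (lborel_Icc L) (\<lambda>x. primitive v x * deriv \<psi> x)"
      by (rule integrable_lborel_Icc_continuous_on) (intro continuous_intros cV cd)
    ultimately have "integral\<^sup>L (lborel_Icc L) (\<lambda>x. h x * deriv \<psi> x)
        = integral\<^sup>L (lborel_Icc L) (\<lambda>x. u x * deriv \<psi> x)
          - integral\<^sup>L (lborel_Icc L) (\<lambda>x. primitive v x * deriv \<psi> x)"
      unfolding h_def by (simp add: left_diff_distrib)
    then show ?thesis
      using w(3)[OF t] integral_primitive_mult_deriv[OF _ w(2) t] L by simp
  qed
  then obtain c where "AE x in lborel_Icc L. h x = c" using du_Bois_Reymond[OF L ih] by blast
  then have "AE x in lborel_Icc L. u x = c + primitive v x" by eventually_elim (auto simp: h_def)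
  then show ?thesis by blast
qed

lemma continuous_AE_zero_imp_zero:
  fixes \<phi> :: "real \<Rightarrow> real"
  assumes L: "0 < L" and c: "continuous_on {0..L} \<phi>" and ae: "AE x in lborel_Icc L. \<phi> x = 0"
    and x: "x \<in> {0..L}"
  shows "\<phi> x = 0"
proof (rule orthogonal_test_funs_imp_zero[OF L c _ x])
  fix \<eta> assume "test_fun L \<eta>"
  show "integral\<^sup>L (lborel_Icc L) (\<lambda>x. \<phi> x * \<eta> x) = 0"
    by (rule integral_eq_zero_AE) (use ae in \<open>eventually_elim, simp\<close>)
qed

lemma continuous_weak_deriv_eq_primitive:
  assumes L: "0 < L" and wd: "weak_deriv L w w'" and cw: "continuous_on {0..L} w"
    and x: "x \<in> {0..L}"
  shows "w x = w 0 + primitive w' x"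
proof -
  obtain c where c: "AE x in lborel_Icc L. w x = c + primitive w' x"
    using weak_deriv_AE_primitive[OF L wd] by blast
  have cW: "continuous_on {0..L} (primitive w')"
    by (rule continuous_on_primitive[OF weak_deriv_lborel_Icc(2)[OF wd]])
  have "w y - (c + primitive w' y) = 0" if "y \<in> {0..L}" for y
    by (rule continuous_AE_zero_imp_zero[OF L _ _ that])
       (intro continuous_intros cw cW, use c in \<open>eventually_elim, simp\<close>)
  from this[OF x] this[of 0] show ?thesis using L by (simp add: primitive_0)
qed

lemma weak_deriv_integration_by_parts:
  fixes u u' w w' :: "real \<Rightarrow> real"
  assumes L: "0 < L" and wu: "weak_deriv L u u'" and ww: "weak_deriv L w w'"
    and Lu: "in_L2 L u" and Lw': "in_L2 L w'"
    and cw: "continuous_on {0..L} w" and w0: "w 0 = K" and wL: "w L = K"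
  shows "L2_inner L u w' + L2_inner L u' w = K * integral\<^sup>L (lborel_Icc L) u'"
proof -
  obtain c where c: "AE x in lborel_Icc L. u x = c + primitive u' x"
    using weak_deriv_AE_primitive[OF L wu] by blast
  have iu': "integrable (lborel_Icc L) u'" and iw': "integrable (lborel_Icc L) w'"
    using weak_deriv_lborel_Icc(2)[OF wu] weak_deriv_lborel_Icc(2)[OF ww] by auto
  have cU: "continuous_on {0..L} (primitive u')" by (rule continuous_on_primitive[OF iu'])
  have cW: "continuous_on {0..L} (primitive w')" by (rule continuous_on_primitive[OF iw'])
  have w_eq: "w x = K + primitive w' x" if "x \<in> {0..L}" for x
    using continuous_weak_deriv_eq_primitive[OF L ww cw that] w0 by simp
  have WL: "primitive w' L = 0" using w_eq[of L] L wL by simp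
  have [measurable]: "u \<in> borel_measurable (lborel_Icc L)" "w' \<in> borel_measurable (lborel_Icc L)"
      "primitive u' \<in> borel_measurable (lborel_Icc L)"
    using in_L2_measurable[OF Lu] in_L2_measurable[OF Lw'] primitive_measurable[OF iu'] by auto
  have iUw': "integrable (lborel_Icc L) (\<lambda>x. primitive u' x * w' x)"
    using integrable_mult_continuous_on[OF iw' cU] by (simp add: mult.commute)
  have iu'W: "integrable (lborel_Icc L) (\<lambda>x. u' x * primitive w' x)"
    by (rule integrable_mult_continuous_on[OF iu' cW])
  have "L2_inner L u w' = integral\<^sup>L (lborel_Icc L) (\<lambda>x. c * w' x + primitive u' x * w' x)"
    unfolding L2_inner_def
    by (rule integral_cong_AE) (measurable, use c in \<open>eventually_elim, simp add: distrib_right\<close>)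
  also have "\<dots> = c * primitive w' L + integral\<^sup>L (lborel_Icc L) (\<lambda>x. primitive u' x * w' x)"
    using iw' iUw' by (simp add: primitive_L)
  finally have e1: "L2_inner L u w' = integral\<^sup>L (lborel_Icc L) (\<lambda>x. primitive u' x * w' x)"
    using WL by simp
  have "L2_inner L u' w = integral\<^sup>L (lborel_Icc L) (\<lambda>x. K * u' x + u' x * primitive w' x)"
    unfolding L2_inner_def
    by (rule Bochner_Integration.integral_cong) (auto simp: w_eq algebra_simps)
  also have "\<dots> = K * integral\<^sup>L (lborel_Icc L) u' + integral\<^sup>L (lborel_Icc L) (\<lambda>x. u' x * primitive w' x)"
    using iu' iu'W by simp
  finally have e2: "L2_inner L u' w
      = K * integral\<^sup>L (lborel_Icc L) u' + integral\<^sup>L (lborel_Icc L) (\<lambda>x. u' x * primitive w' x)" .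
  show ?thesis
    using e1 e2 WL integral_primitive_mult_add[OF _ iu' iw'] L by simp
qed

lemma abs_integral_le_norm2:
  assumes L: "0 \<le> L" and w: "in_L2 L w"
  shows "\<bar>integral\<^sup>L (lborel_Icc L) w\<bar> \<le> sqrt L * norm2 L w"
proof -
  have "integral\<^sup>L (lborel_Icc L) w = L2_inner L w (\<lambda>x. 1)" unfolding L2_inner_def by simp
  moreover have "\<bar>L2_inner L w (\<lambda>x. 1)\<bar> \<le> norm2 L w * norm2 L (\<lambda>x. 1)"
    by (rule L2_inner_Cauchy_Schwarz[OF w in_L2_const])
  moreover have "norm2 L (\<lambda>x. 1) = sqrt L" by (simp add: norm2_eq_sqrt_L2_inner L2_inner_one_one[OF L])
  ultimately show ?thesis by (simp add: mult.commute)
qed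

lemma abs_primitive_diff_le:
  assumes iv: "integrable (lborel_Icc L) v" and x: "x \<in> {0..L}" and y: "y \<in> {0..L}"
  shows "\<bar>primitive v x - primitive v y\<bar> \<le> integral\<^sup>L (lborel_Icc L) (\<lambda>z. \<bar>v z\<bar>)"
proof -
  have sx: "{0..x} \<in> sets (lborel_Icc L)" "{0..y} \<in> sets (lborel_Icc L)"
    unfolding lborel_Icc_def using x y by (subst sets_restrict_space_iff, auto)+
  have i1: "integrable (lborel_Icc L) (\<lambda>z. indicator {0..x} z * v z)"
    using integrable_mult_indicator[OF sx(1) iv] by simp
  have i2: "integrable (lborel_Icc L) (\<lambda>z. indicator {0..y} z * v z)"
    using integrable_mult_indicator[OF sx(2) iv] by simp
  have "primitive v x - primitive v y
      = integral\<^sup>L (lborel_Icc L) (\<lambda>z. (indicator {0..x} z - indicator {0..y} z) * v z)"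
    unfolding primitive_eq_integral_indicator[OF x] primitive_eq_integral_indicator[OF y]
    using i1 i2 by (simp add: left_diff_distrib)
  also have "\<bar>\<dots>\<bar> \<le> integral\<^sup>L (lborel_Icc L) (\<lambda>z. \<bar>(indicator {0..x} z - indicator {0..y} z) * v z\<bar>)"
    by (rule integral_abs_bound)
  also have "\<dots> \<le> integral\<^sup>L (lborel_Icc L) (\<lambda>z. \<bar>v z\<bar>)"
  proof (rule integral_mono)
    show "integrable (lborel_Icc L) (\<lambda>z. \<bar>(indicator {0..x} z - indicator {0..y} z) * v z\<bar>)"
      using i1 i2 by (simp add: left_diff_distrib)
    show "\<bar>(indicator {0..x} z - indicator {0..y} z) * v z\<bar> \<le> \<bar>v z\<bar>" for z
      by (auto simp: indicator_def abs_mult)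
  qed (use iv in simp)
  finally show ?thesis .
qed

text \<open>A mean-free continuous function vanishes somewhere, so it is bounded by its oscillation.\<close>

lemma abs_mean_free_primitive_le:
  assumes L: "0 < L" and iv: "integrable (lborel_Icc L) v"
    and mean: "integral\<^sup>L (lborel_Icc L) (\<lambda>y. c + primitive v y) = 0" and x: "x \<in> {0..L}"
  shows "\<bar>c + primitive v x\<bar> \<le> integral\<^sup>L (lborel_Icc L) (\<lambda>y. \<bar>v y\<bar>)"
proof -
  define D where "D = integral\<^sup>L (lborel_Icc L) (\<lambda>y. \<bar>v y\<bar>)"
  have iV: "integrable (lborel_Icc L) (primitive v)"
    by (rule integrable_lborel_Icc_continuous_on[OF continuous_on_primitive[OF iv]])
  have "L * (c + primitive v x) = integral\<^sup>L (lborel_Icc L) (\<lambda>y. primitive v x - primitive v y)"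
    using mean iV L by (simp add: measure_lborel_Icc algebra_simps)
  also have "\<bar>\<dots>\<bar> \<le> integral\<^sup>L (lborel_Icc L) (\<lambda>y. D)"
    using abs_primitive_diff_le[OF iv x] iV
    by (intro order_trans[OF integral_abs_bound] integral_mono) (auto simp: D_def)
  also have "\<dots> = L * D" using L by (simp add: measure_lborel_Icc)
  finally show ?thesis using L by (simp add: abs_mult D_def)
qed

lemma integral_abs_power2_le:
  assumes L: "0 \<le> L" and v: "in_L2 L v"
  shows "(integral\<^sup>L (lborel_Icc L) (\<lambda>x. \<bar>v x\<bar>))^2 \<le> L * L2_inner L v v"
proof -
  have "norm2 L (\<lambda>x. \<bar>v x\<bar>) = norm2 L v" by (simp add: norm2_def)
  moreover have "in_L2 L (\<lambda>x. \<bar>v x\<bar>)" using v unfolding in_L2_iff_lborel_Icc by auto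
  ultimately have "\<bar>integral\<^sup>L (lborel_Icc L) (\<lambda>x. \<bar>v x\<bar>)\<bar> \<le> sqrt L * norm2 L v"
    using abs_integral_le_norm2[of L "\<lambda>x. \<bar>v x\<bar>"] L by simp
  from power_mono[OF this abs_ge_zero, of 2] L show ?thesis
    by (simp add: power_mult_distrib norm2_power2)
qed

lemma poincare_wirtinger:
  fixes u v :: "real \<Rightarrow> real"
  assumes L: "0 < L" and wd: "weak_deriv L u v" and Lu: "in_L2 L u" and Lv: "in_L2 L v"
    and m: "integral\<^sup>L (lborel_Icc L) u = 0"
  shows "L2_inner L u u \<le> L^2 * L2_inner L v v"
proof -
  obtain c where c: "AE x in lborel_Icc L. u x = c + primitive v x"
    using weak_deriv_AE_primitive[OF L wd] by blast
  have iv: "integrable (lborel_Icc L) v" using weak_deriv_lborel_Icc(2)[OF wd] .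
  define D where "D = integral\<^sup>L (lborel_Icc L) (\<lambda>y. \<bar>v y\<bar>)"
  have cV: "continuous_on {0..L} (primitive v)" by (rule continuous_on_primitive[OF iv])
  have [measurable]: "u \<in> borel_measurable (lborel_Icc L)"
      "primitive v \<in> borel_measurable (lborel_Icc L)"
    using in_L2_measurable[OF Lu] borel_measurable_lborel_Icc_continuous_on[OF cV] by auto
  have "integral\<^sup>L (lborel_Icc L) (\<lambda>x. c + primitive v x) = integral\<^sup>L (lborel_Icc L) u"
    by (rule integral_cong_AE) (measurable, use c in \<open>eventually_elim, simp\<close>)
  then have bound: "\<bar>c + primitive v x\<bar> \<le> D" if "x \<in> {0..L}" for x
    using abs_mean_free_primitive_le[OF L iv _ that] m by (simp add: D_def)
  have "L2_inner L u u = integral\<^sup>L (lborel_Icc L) (\<lambda>x. (c + primitive v x)^2)"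
    unfolding L2_inner_def
    by (rule integral_cong_AE) (measurable, use c in \<open>eventually_elim, simp add: power2_eq_square\<close>)
  also have "\<dots> \<le> integral\<^sup>L (lborel_Icc L) (\<lambda>x. D^2)"
  proof (rule integral_mono)
    show "integrable (lborel_Icc L) (\<lambda>x. (c + primitive v x)^2)"
      by (rule integrable_lborel_Icc_continuous_on) (intro continuous_intros cV)
    show "(c + primitive v x)^2 \<le> D^2" if "x \<in> space (lborel_Icc L)" for x
    proof -
      have "\<bar>c + primitive v x\<bar>^2 \<le> D^2" by (rule power_mono[OF bound abs_ge_zero]) (use that in simp)
      then show ?thesis by simp
    qed
  qed simp
  also have "\<dots> = L * D^2" using L by (simp add: measure_lborel_Icc)
  also have "\<dots> \<le> L * (L * L2_inner L v v)"
    using integral_abs_power2_le[OF _ Lv] L by (simp add: D_def)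
  finally show ?thesis by (simp add: power2_eq_square mult.assoc)
qed

lemma L2_inner_difference_quotient_split:
  assumes As: "in_L2 L As" and At: "in_L2 L At" and Cs: "in_L2 L Cs" and Ct: "in_L2 L Ct"
    and B: "in_L2 L B" and D: "in_L2 L D"
  shows "(L2_inner L As Cs - L2_inner L At Ct) / h - (L2_inner L B Ct + L2_inner L At D)
      = L2_inner L (\<lambda>x. (As x - At x) / h - B x) Ct + L2_inner L (\<lambda>x. (As x - At x) / h - B x) (\<lambda>x. Cs x - Ct x)
        + L2_inner L B (\<lambda>x. Cs x - Ct x) + L2_inner L At (\<lambda>x. (Cs x - Ct x) / h - D x)"
proof -
  have dA: "in_L2 L (\<lambda>x. As x - At x)" by (rule in_L2_diff[OF As At])
  have dC: "in_L2 L (\<lambda>x. Cs x - Ct x)" by (rule in_L2_diff[OF Cs Ct])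
  have qA: "in_L2 L (\<lambda>x. (As x - At x) / h)" by (rule in_L2_divide[OF dA])
  have qC: "in_L2 L (\<lambda>x. (Cs x - Ct x) / h)" by (rule in_L2_divide[OF dC])
  have sA: "(\<lambda>x. (As x - At x) / h) = (\<lambda>x. (1/h) * (As x - At x))" by auto
  have sC: "(\<lambda>x. (Cs x - Ct x) / h) = (\<lambda>x. (1/h) * (Cs x - Ct x))" by auto
  have e1: "L2_inner L (\<lambda>x. (As x - At x) / h - B x) Ct = L2_inner L (\<lambda>x. (As x - At x) / h) Ct - L2_inner L B Ct"
    by (rule L2_inner_diff_left[OF qA B Ct])
  have e2: "L2_inner L (\<lambda>x. (As x - At x) / h - B x) (\<lambda>x. Cs x - Ct x)
      = L2_inner L (\<lambda>x. (As x - At x) / h) (\<lambda>x. Cs x - Ct x) - L2_inner L B (\<lambda>x. Cs x - Ct x)"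
    by (rule L2_inner_diff_left[OF qA B dC])
  have e3: "L2_inner L (\<lambda>x. (As x - At x) / h) (\<lambda>x. Cs x - Ct x)
      = L2_inner L (\<lambda>x. (As x - At x) / h) Cs - L2_inner L (\<lambda>x. (As x - At x) / h) Ct"
    by (rule L2_inner_diff_right[OF Cs Ct qA])
  have e4: "L2_inner L B (\<lambda>x. Cs x - Ct x) = L2_inner L B Cs - L2_inner L B Ct"
    by (rule L2_inner_diff_right[OF Cs Ct B])
  have e5: "L2_inner L At (\<lambda>x. (Cs x - Ct x) / h - D x) = L2_inner L At (\<lambda>x. (Cs x - Ct x) / h) - L2_inner L At D"
    by (rule L2_inner_diff_right[OF qC D At])
  have e6: "L2_inner L At (\<lambda>x. (Cs x - Ct x) / h) = (1/h) * (L2_inner L At Cs - L2_inner L At Ct)"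
    unfolding sC L2_inner_cmult_right by (simp add: L2_inner_diff_right[OF Cs Ct At])
  have e7: "L2_inner L (\<lambda>x. (As x - At x) / h) Cs = (1/h) * (L2_inner L As Cs - L2_inner L At Cs)"
    unfolding sA L2_inner_cmult_left by (simp add: L2_inner_diff_left[OF As At Cs])
  show ?thesis
    unfolding e1 e2 e3 e4 e5 e6 e7 by (simp add: diff_divide_distrib algebra_simps)
qed

lemma abs_L2_inner_difference_quotient_le:
  assumes As: "in_L2 L As" and At: "in_L2 L At" and Cs: "in_L2 L Cs" and Ct: "in_L2 L Ct"
    and B: "in_L2 L B" and D: "in_L2 L D"
  shows "\<bar>(L2_inner L As Cs - L2_inner L At Ct) / h - (L2_inner L B Ct + L2_inner L At D)\<bar>
      \<le> norm2 L (\<lambda>x. (As x - At x) / h - B x) * norm2 L Ct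
        + norm2 L (\<lambda>x. (As x - At x) / h - B x) * norm2 L (\<lambda>x. Cs x - Ct x)
        + norm2 L B * norm2 L (\<lambda>x. Cs x - Ct x)
        + norm2 L At * norm2 L (\<lambda>x. (Cs x - Ct x) / h - D x)"
proof -
  have qA: "in_L2 L (\<lambda>x. (As x - At x) / h - B x)" by (intro in_L2_diff in_L2_divide As At B)
  have qC: "in_L2 L (\<lambda>x. (Cs x - Ct x) / h - D x)" by (intro in_L2_diff in_L2_divide Cs Ct D)
  have dC: "in_L2 L (\<lambda>x. Cs x - Ct x)" by (intro in_L2_diff Cs Ct)
  show ?thesis
    unfolding L2_inner_difference_quotient_split[OF As At Cs Ct B D]
    using L2_inner_Cauchy_Schwarz[OF qA Ct] L2_inner_Cauchy_Schwarz[OF qA dC]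
      L2_inner_Cauchy_Schwarz[OF B dC] L2_inner_Cauchy_Schwarz[OF At qC]
    by linarith
qed

lemma has_real_derivative_L2_inner:
  fixes a b c d :: "real \<Rightarrow> real \<Rightarrow> real"
  assumes t: "0 \<le> t"
    and La: "\<And>s. 0 \<le> s \<Longrightarrow> in_L2 L (a s)" and Lc: "\<And>s. 0 \<le> s \<Longrightarrow> in_L2 L (c s)"
    and Lb: "in_L2 L (b t)" and Ld: "in_L2 L (d t)"
    and cc: "((\<lambda>s. norm2 L (\<lambda>x. c s x - c t x)) \<longlongrightarrow> 0) (at t within {0..})"
    and da: "((\<lambda>s. norm2 L (\<lambda>x. (a s x - a t x) / (s - t) - b t x)) \<longlongrightarrow> 0) (at t within {0..})"
    and dc: "((\<lambda>s. norm2 L (\<lambda>x. (c s x - c t x) / (s - t) - d t x)) \<longlongrightarrow> 0) (at t within {0..})"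
  shows "((\<lambda>s. L2_inner L (a s) (c s)) has_real_derivative
    L2_inner L (b t) (c t) + L2_inner L (a t) (d t)) (at t within {0..})"
proof -
  define F' where "F' = L2_inner L (b t) (c t) + L2_inner L (a t) (d t)"
  define E where "E = (\<lambda>s. (L2_inner L (a s) (c s) - L2_inner L (a t) (c t)) / (s - t) - F')"
  define g where "g = (\<lambda>s. norm2 L (\<lambda>x. (a s x - a t x) / (s - t) - b t x) * norm2 L (c t)
       + norm2 L (\<lambda>x. (a s x - a t x) / (s - t) - b t x) * norm2 L (\<lambda>x. c s x - c t x)
       + norm2 L (b t) * norm2 L (\<lambda>x. c s x - c t x)
       + norm2 L (a t) * norm2 L (\<lambda>x. (c s x - c t x) / (s - t) - d t x))"
  have "(g \<longlongrightarrow> 0 * norm2 L (c t) + 0 * 0 + norm2 L (b t) * 0 + norm2 L (a t) * 0) (at t within {0..})"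
    unfolding g_def by (intro tendsto_intros da cc dc)
  then have g0: "(g \<longlongrightarrow> 0) (at t within {0..})" by simp
  have "\<forall>\<^sub>F s in at t within {0..}. s \<in> {0..}" by (simp add: eventually_at_filter)
  then have "\<forall>\<^sub>F s in at t within {0..}. norm (E s) \<le> g s"
    by eventually_elim
       (use abs_L2_inner_difference_quotient_le[OF La La[OF t] Lc Lc[OF t] Lb Ld] t in
         \<open>auto simp: E_def F'_def g_def\<close>)
  then have "(E \<longlongrightarrow> 0) (at t within {0..})" by (rule Lim_null_comparison[OF _ g0])
  then have "((\<lambda>s. E s + F') \<longlongrightarrow> 0 + F') (at t within {0..})" by (intro tendsto_intros)
  then show ?thesis unfolding has_field_derivative_iff E_def F'_def by simp
qed

lemma norm2_le_Hk_dist: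
  assumes "i \<le> k"
  shows "norm2 L (\<lambda>x. u i x - v i x) \<le> Hk_dist L k u v"
proof -
  have "(norm2 L (\<lambda>x. u i x - v i x))^2 \<le> (\<Sum>j\<le>k. (norm2 L (\<lambda>x. u j x - v j x))^2)"
    by (rule member_le_sum) (use assms in auto)
  then have "sqrt ((norm2 L (\<lambda>x. u i x - v i x))^2) \<le> Hk_dist L k u v"
    unfolding Hk_dist_def by (rule real_sqrt_le_mono)
  then show ?thesis using norm2_nonneg by simp
qed

lemma tendsto_norm2_Hk_dist:
  assumes "((\<lambda>s. Hk_dist L k (u s) v) \<longlongrightarrow> 0) F" "i \<le> k"
  shows "((\<lambda>s. norm2 L (\<lambda>x. u s i x - v i x)) \<longlongrightarrow> 0) F"
proof (rule Lim_null_comparison[OF _ assms(1)])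
  show "\<forall>\<^sub>F s in F. norm (norm2 L (\<lambda>x. u s i x - v i x)) \<le> Hk_dist L k (u s) v"
    using norm2_le_Hk_dist[OF assms(2)] norm2_nonneg by simp
qed

lemma L2_inner_expand_AE:
  assumes eq: "AE x in lborel_Icc L. r x = \<alpha> * f1 x - \<beta> * f2 x + \<gamma> * f3 x - \<delta> * f4 x"
    and f1: "in_L2 L f1" and f2: "in_L2 L f2" and f3: "in_L2 L f3" and f4: "in_L2 L f4"
    and u: "in_L2 L u" and r: "in_L2 L r"
  shows "L2_inner L u r
    = \<alpha> * L2_inner L u f1 - \<beta> * L2_inner L u f2 + \<gamma> * L2_inner L u f3 - \<delta> * L2_inner L u f4"
proof -
  have [measurable]: "u \<in> borel_measurable (lborel_Icc L)" "r \<in> borel_measurable (lborel_Icc L)"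
    "f1 \<in> borel_measurable (lborel_Icc L)" "f2 \<in> borel_measurable (lborel_Icc L)"
    "f3 \<in> borel_measurable (lborel_Icc L)" "f4 \<in> borel_measurable (lborel_Icc L)"
    using in_L2_measurable assms by auto
  have "L2_inner L u r = integral\<^sup>L (lborel_Icc L)
      (\<lambda>x. \<alpha> * (u x * f1 x) - \<beta> * (u x * f2 x) + \<gamma> * (u x * f3 x) - \<delta> * (u x * f4 x))"
    unfolding L2_inner_def
  proof (rule integral_cong_AE)
    show "AE x in lborel_Icc L. u x * r x
        = \<alpha> * (u x * f1 x) - \<beta> * (u x * f2 x) + \<gamma> * (u x * f3 x) - \<delta> * (u x * f4 x)"
      using eq
    proof eventually_elim
      case (elim x)
      show ?case by (simp add: elim algebra_simps)
    qed
  qed measurable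
  also have "\<dots> = \<alpha> * L2_inner L u f1 - \<beta> * L2_inner L u f2 + \<gamma> * L2_inner L u f3 - \<delta> * L2_inner L u f4"
    unfolding L2_inner_def using integrable_mult_in_L2[OF u f1] integrable_mult_in_L2[OF u f2]
      integrable_mult_in_L2[OF u f3] integrable_mult_in_L2[OF u f4]
    by simp
  finally show ?thesis .
qed

lemma power2_le_of_exp_weighted_le:
  fixes \<gamma> t s y S :: real
  assumes "exp (- (\<gamma>/4) * (t - s)) * \<bar>y\<bar> \<le> S"
  shows "y^2 \<le> S^2 * exp (\<gamma> * (t - s) / 2)"
proof -
  have "(exp (- (\<gamma>/4) * (t - s)) * \<bar>y\<bar>)^2 \<le> S^2"
    by (rule power_mono[OF assms]) simp
  moreover have "exp (- (\<gamma>/4) * (t - s))^2 = exp (- (\<gamma> * (t - s) / 2))"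
    by (simp add: power2_eq_square flip: exp_add)
  then have "(exp (- (\<gamma>/4) * (t - s)) * \<bar>y\<bar>)^2 = exp (- (\<gamma> * (t - s) / 2)) * y^2"
    by (simp add: power_mult_distrib)
  ultimately have "exp (\<gamma> * (t - s) / 2) * (exp (- (\<gamma> * (t - s) / 2)) * y^2)
      \<le> exp (\<gamma> * (t - s) / 2) * S^2"
    by (intro mult_left_mono) simp_all
  then show ?thesis by (simp add: exp_minus field_simps)
qed

lemma differential_inequality_decay:
  fixes V V' f :: "real \<Rightarrow> real"
  assumes D: "\<And>s. 0 \<le> s \<Longrightarrow> (V has_real_derivative V' s) (at s within {0..})"
    and ineq: "\<And>s. 0 \<le> s \<Longrightarrow> V' s \<le> - \<gamma> * V s + C * (f s)^2"
    and g: "0 < \<gamma>" and C: "0 \<le> C" and t: "0 \<le> t" and S: "0 \<le> S"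
    and bnd: "\<And>s. s \<in> {0..t} \<Longrightarrow> exp (- (\<gamma>/4) * (t - s)) * \<bar>f s\<bar> \<le> S"
  shows "V t \<le> exp (- \<gamma> * t) * V 0 + 2 * C * S^2 / \<gamma>"
proof -
  txt \<open>\<open>G\<close> is nonincreasing on \<open>[0, t]\<close>: the growth \<open>f(s)^2 \<le> S^2 exp(\<gamma>(t-s)/2)\<close> of the
    forcing is absorbed by the correction term.\<close>
  define a where "a = 2 * C * S^2 / \<gamma>"
  define G where "G = (\<lambda>s. exp (\<gamma> * s) * (V s - a * exp (\<gamma> * (t - s) / 2)))"
  have fb: "(f s)^2 \<le> S^2 * exp (\<gamma> * (t - s) / 2)" if "s \<in> {0..t}" for s
    by (rule power2_le_of_exp_weighted_le[OF bnd[OF that]])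
  have contV: "continuous_on {0..t} V"
    unfolding continuous_on_eq_continuous_within
    using DERIV_continuous[OF D] continuous_within_subset by fastforce
  have contG: "continuous_on {0..t} G" unfolding G_def
    by (intro continuous_intros contV) auto
  have "G t \<le> G 0"
  proof (rule DERIV_nonpos_imp_decreasing_open[OF t _ contG])
    fix x assume x: "0 < x" "x < t"
    have Dx: "(V has_real_derivative V' x) (at x)"
    proof -
      have "at x within {0..} = at x" by (rule at_within_interior) (use x in auto)
      then show ?thesis using D[of x] x by simp
    qed
    have DG: "(G has_real_derivative
        exp (\<gamma> * x) * \<gamma> * (V x - a * exp (\<gamma> * (t - x) / 2))
        + exp (\<gamma> * x) * (V' x - a * (exp (\<gamma> * (t - x) / 2) * (- \<gamma> / 2)))) (at x)"
      unfolding G_def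
      by (auto intro!: derivative_eq_intros Dx simp: algebra_simps)
    have "exp (\<gamma> * x) * \<gamma> * (V x - a * exp (\<gamma> * (t - x) / 2))
        + exp (\<gamma> * x) * (V' x - a * (exp (\<gamma> * (t - x) / 2) * (- \<gamma> / 2)))
        = exp (\<gamma> * x) * (V' x + \<gamma> * V x - C * S^2 * exp (\<gamma> * (t - x) / 2))"
      unfolding a_def using g by (simp add: field_simps)
    also have "\<dots> \<le> 0"
    proof -
      have "V' x + \<gamma> * V x \<le> C * (f x)^2" using ineq[of x] x by simp
      also have "\<dots> \<le> C * (S^2 * exp (\<gamma> * (t - x) / 2))"
        by (rule mult_left_mono[OF fb C]) (use x in auto)
      finally have "V' x + \<gamma> * V x - C * S^2 * exp (\<gamma> * (t - x) / 2) \<le> 0" by simp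
      then show ?thesis by (simp add: mult_le_0_iff)
    qed
    finally show "\<exists>y. (G has_real_derivative y) (at x) \<and> y \<le> 0" using DG by blast
  qed
  then have "exp (\<gamma> * t) * (V t - a) \<le> V 0 - a * exp (\<gamma> * t / 2)"
    unfolding G_def by simp
  moreover have "0 \<le> a * exp (\<gamma> * t / 2)" unfolding a_def using C g by simp
  ultimately have "exp (\<gamma> * t) * (V t - a) \<le> V 0" by linarith
  then have "V t - a \<le> exp (- \<gamma> * t) * V 0"
    by (simp add: exp_minus field_simps)
  then show ?thesis unfolding a_def by simp
qed

lemma mult_le_young_sqrt:
  fixes h F I L Q a :: real
  assumes a: "0 < a" and Q: "0 \<le> Q" and L: "0 \<le> L" and I: "\<bar>I\<bar> \<le> sqrt L * sqrt Q"
  shows "h * F * I \<le> a * Q + h^2 * L / (4 * a) * F^2"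
proof -
  define y where "y = \<bar>h * F\<bar> * sqrt L"
  have "h * F * I \<le> \<bar>h * F\<bar> * \<bar>I\<bar>" by (simp add: abs_mult[symmetric])
  also have "\<dots> \<le> \<bar>h * F\<bar> * (sqrt L * sqrt Q)" by (rule mult_left_mono[OF I]) simp
  also have "\<dots> = y * sqrt Q" by (simp add: y_def)
  also have "\<dots> \<le> a * (sqrt Q)^2 + y^2 / (4 * a)"
  proof -
    have "0 \<le> (2 * a * sqrt Q - y)^2 / (4 * a)" using a by simp
    also have "\<dots> = a * (sqrt Q)^2 + y^2 / (4 * a) - y * sqrt Q"
      using a by (simp add: power2_eq_square field_simps)
    finally show ?thesis by simp
  qed
  also have "\<dots> = a * Q + h^2 * L / (4 * a) * F^2"
    using Q L by (simp add: y_def power_mult_distrib)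
  finally show ?thesis .
qed

text \<open>Constants of the energy estimate for wave speed \<open>c2 = c^2 = g h\<close>, stiffness \<open>sh = sigma h\<close>,
  damping \<open>mu, kappa\<close> and boundary flux coefficient \<open>hs = h\<close> (the paper's \<open>h\<^sup>*\<close>). The
  arguments of \<open>lyapunov\<close> stand for \<open>|phi|^2, |phi_x|^2, |phi_xx|^2, |phi_t|^2\<close> and \<open><phi, phi_t>\<close>.\<close>

locale lyapunov_constants =
  fixes L c2 sh \<mu> \<kappa> hs :: real
  assumes L_pos: "0 < L" and c2_pos: "0 < c2" and sh_pos: "0 < sh"
    and mu_pos: "0 < \<mu>" and kappa_nonneg: "0 \<le> \<kappa>"
begin

definition eps where "eps = min (1/2) (min (c2 / (2 * L^2)) (\<mu> / (4 * L^2)))"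
definition upper_const where "upper_const = 1 + c2 + \<mu> + sh + \<kappa>"
definition lower_const where "lower_const = min (1/4) (min (c2/4) (sh/2)) / (1 + L^2)"
definition dissipation_const where
  "dissipation_const = min (\<mu> / (2 * L^2)) (min (eps * c2 / (2 * (1 + L^2))) (eps * sh))"
definition decay_const where "decay_const = dissipation_const / upper_const"
definition forcing_const where "forcing_const = hs^2 * L / \<mu> + eps * hs^2 * L / (2 * c2)"
definition overshoot where "overshoot = sqrt (upper_const / lower_const)"
definition rate where "rate = decay_const / 4"
definition gain where "gain = sqrt (2 * forcing_const / (decay_const * lower_const)) + 1"

definition lyapunov :: "real \<Rightarrow> real \<Rightarrow> real \<Rightarrow> real \<Rightarrow> real \<Rightarrow> real" where
  "lyapunov A0 A1 A2 B X = 1/2 * B + c2/2 * A1 + sh/2 * A2 + eps * (X + \<mu>/2 * A1 + \<kappa>/2 * A0)"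

lemma eps_pos: "0 < eps"
  unfolding eps_def using L_pos c2_pos mu_pos by simp

lemma eps_le: "eps \<le> 1/2" "eps * L^2 \<le> c2 / 2" "eps * L^2 \<le> \<mu> / 4"
proof -
  have L2: "0 < L^2" using L_pos by simp
  show "eps \<le> 1/2" unfolding eps_def by simp
  have "eps * L^2 \<le> c2 / (2 * L^2) * L^2" by (rule mult_right_mono) (simp_all add: eps_def)
  then show "eps * L^2 \<le> c2 / 2" using L2 by simp
  have "eps * L^2 \<le> \<mu> / (4 * L^2) * L^2" by (rule mult_right_mono) (simp_all add: eps_def)
  then show "eps * L^2 \<le> \<mu> / 4" using L2 by simp
qed

lemma upper_const_pos: "0 < upper_const"
  unfolding upper_const_def using c2_pos mu_pos sh_pos kappa_nonneg by simp

lemma lower_const_pos: "0 < lower_const"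
  unfolding lower_const_def using c2_pos sh_pos by (simp add: add_pos_nonneg)

lemma dissipation_const_pos: "0 < dissipation_const"
  unfolding dissipation_const_def
  using L_pos mu_pos eps_pos c2_pos sh_pos by (simp add: add_pos_nonneg)

lemma decay_const_pos: "0 < decay_const"
  unfolding decay_const_def using dissipation_const_pos upper_const_pos by simp

lemma forcing_const_nonneg: "0 \<le> forcing_const"
  unfolding forcing_const_def using L_pos mu_pos eps_pos c2_pos by simp

lemma overshoot_pos: "0 < overshoot"
  unfolding overshoot_def using upper_const_pos lower_const_pos by simp

lemma rate_pos: "0 < rate"
  unfolding rate_def using decay_const_pos by simp

lemma gain_pos: "0 < gain"
proof -
  have "0 \<le> 2 * forcing_const / (decay_const * lower_const)"
    using forcing_const_nonneg decay_const_pos lower_const_pos by simp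
  then show ?thesis unfolding gain_def by (simp add: add_nonneg_pos)
qed

lemma lyapunov_le:
  assumes "0 \<le> A0" "0 \<le> A1" "0 \<le> A2" "0 \<le> B" and X: "\<bar>X\<bar> \<le> (A0 + B) / 2"
  shows "lyapunov A0 A1 A2 B X \<le> upper_const * (A0 + A1 + A2 + B)"
proof -
  have "eps * X \<le> eps * ((A0 + B) / 2)"
    using mult_left_mono[OF order_trans[OF abs_ge_self X]] eps_pos by simp
  also have "\<dots> \<le> 1/2 * ((A0 + B) / 2)"
    by (rule mult_right_mono[OF eps_le(1)]) (use assms in simp)
  finally have "eps * X \<le> 1/2 * ((A0 + B) / 2)" .
  moreover have "eps * (\<mu>/2 * A1) \<le> 1/2 * (\<mu>/2 * A1)" "eps * (\<kappa>/2 * A0) \<le> 1/2 * (\<kappa>/2 * A0)"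
    using assms mu_pos kappa_nonneg by (intro mult_right_mono eps_le; simp)+
  ultimately have "lyapunov A0 A1 A2 B X
      \<le> (1/4 + \<kappa>/4) * A0 + (c2/2 + \<mu>/4) * A1 + (sh/2) * A2 + (3/4) * B"
    unfolding lyapunov_def by (simp add: algebra_simps)
  also have "\<dots> \<le> upper_const * A0 + upper_const * A1 + upper_const * A2 + upper_const * B"
    using assms c2_pos mu_pos sh_pos kappa_nonneg
    by (intro add_mono mult_right_mono) (simp_all add: upper_const_def)
  finally show ?thesis by (simp add: algebra_simps)
qed

lemma lyapunov_ge:
  assumes "0 \<le> A0" "0 \<le> A1" "0 \<le> A2" "0 \<le> B" and X: "\<bar>X\<bar> \<le> (A0 + B) / 2"
    and poincare: "A0 \<le> L^2 * A1"
  shows "lower_const * (A0 + A1 + A2 + B) \<le> lyapunov A0 A1 A2 B X"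
proof -
  define mm where "mm = min (1/4) (min (c2/4) (sh/2))"
  have "- X \<le> (A0 + B) / 2" using X by linarith
  then have "eps * (- X) \<le> eps * ((A0 + B) / 2)" by (rule mult_left_mono) (use eps_pos in simp)
  moreover have "eps * A0 \<le> c2 / 2 * A1"
  proof -
    have "eps * A0 \<le> eps * (L^2 * A1)" by (rule mult_left_mono[OF poincare]) (use eps_pos in simp)
    also have "\<dots> \<le> c2 / 2 * A1"
      using mult_right_mono[OF eps_le(2) assms(2)] by (simp add: mult.assoc)
    finally show ?thesis .
  qed
  moreover have "eps * B \<le> 1/2 * B" by (rule mult_right_mono[OF eps_le(1) assms(4)])
  moreover have "0 \<le> eps * (\<mu>/2 * A1)" "0 \<le> eps * (\<kappa>/2 * A0)"
    using eps_pos mu_pos kappa_nonneg assms by simp_all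
  ultimately have low: "B/4 + c2/4 * A1 + sh/2 * A2 \<le> lyapunov A0 A1 A2 B X"
    unfolding lyapunov_def by (simp add: algebra_simps)
  have "mm * B \<le> 1/4 * B" "mm * A1 \<le> c2/4 * A1" "mm * A2 \<le> sh/2 * A2"
    by (rule mult_right_mono, simp add: mm_def, simp add: assms)+
  then have mid: "mm * (A1 + A2 + B) \<le> B/4 + c2/4 * A1 + sh/2 * A2"
    by (simp add: algebra_simps)
  have "L^2 * A1 \<le> L^2 * (A1 + A2 + B)" by (rule mult_left_mono) (use assms in auto)
  then have "A0 + A1 + A2 + B \<le> (1 + L^2) * (A1 + A2 + B)"
    using poincare by (simp add: algebra_simps)
  then have "mm / (1 + L^2) * (A0 + A1 + A2 + B) \<le> mm / (1 + L^2) * ((1 + L^2) * (A1 + A2 + B))"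
    by (rule mult_left_mono) (use c2_pos sh_pos in \<open>simp add: mm_def add_pos_nonneg\<close>)
  also have "\<dots> = mm * (A1 + A2 + B)"
    using add_pos_nonneg[OF zero_less_one zero_le_power2[of L]] by simp
  finally show ?thesis using low mid unfolding lower_const_def mm_def by linarith
qed

lemma dissipation_le_lyapunov:
  assumes "0 \<le> A0" "0 \<le> A1" "0 \<le> A2" "0 \<le> B" and X: "\<bar>X\<bar> \<le> (A0 + B) / 2"
    and poincare: "A0 \<le> L^2 * A1" "B \<le> L^2 * Q1"
  shows "decay_const * lyapunov A0 A1 A2 B X \<le> \<mu>/2 * Q1 + eps * (c2/2) * A1 + eps * sh * A2"
proof -
  have hL: "0 < 1 + L^2" by (simp add: add_pos_nonneg)
  have "dissipation_const * B \<le> \<mu> / (2 * L^2) * B"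
    by (rule mult_right_mono) (auto simp: dissipation_const_def assms(4))
  also have "\<dots> \<le> \<mu> / (2 * L^2) * (L^2 * Q1)"
    by (rule mult_left_mono[OF poincare(2)]) (use mu_pos in simp)
  also have "\<dots> = \<mu>/2 * Q1" using L_pos by (simp add: field_simps)
  finally have B: "dissipation_const * B \<le> \<mu>/2 * Q1" .
  have "dissipation_const * (1 + L^2) \<le> eps * c2 / (2 * (1 + L^2)) * (1 + L^2)"
    by (rule mult_right_mono) (auto simp: dissipation_const_def add_pos_nonneg)
  also have "\<dots> = eps * (c2/2)" using hL by (simp add: field_simps)
  finally have A1: "dissipation_const * (1 + L^2) * A1 \<le> eps * (c2/2) * A1"
    by (rule mult_right_mono[OF _ assms(2)])
  have A2: "dissipation_const * A2 \<le> eps * sh * A2"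
    by (rule mult_right_mono) (auto simp: dissipation_const_def assms(3))
  have "decay_const * lyapunov A0 A1 A2 B X \<le> decay_const * (upper_const * (A0 + A1 + A2 + B))"
    by (rule mult_left_mono[OF lyapunov_le[OF assms(1-5)]]) (use decay_const_pos in simp)
  also have "\<dots> = dissipation_const * (A0 + A1 + A2 + B)"
    using upper_const_pos by (simp add: decay_const_def)
  also have "\<dots> \<le> dissipation_const * ((1 + L^2) * A1 + A2 + B)"
    by (rule mult_left_mono) (use poincare(1) dissipation_const_pos in \<open>simp_all add: algebra_simps\<close>)
  also have "\<dots> \<le> \<mu>/2 * Q1 + eps * (c2/2) * A1 + eps * sh * A2"
    using A1 A2 B by (simp add: algebra_simps)
  finally show ?thesis .
qed

text \<open>\<open>I1 = \<integral>phi_tx\<close> and \<open>J1 = \<integral>phi_x\<close> come from the boundary terms, \<open>Q1 = |phi_tx|^2\<close>.\<close>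

lemma energy_derivative_le:
  assumes "0 \<le> A0" "0 \<le> A1" "0 \<le> A2" "0 \<le> B" "0 \<le> Q1" and X: "\<bar>X\<bar> \<le> (A0 + B) / 2"
    and poincare: "A0 \<le> L^2 * A1" "B \<le> L^2 * Q1"
    and I1: "\<bar>I1\<bar> \<le> sqrt L * sqrt Q1" and J1: "\<bar>J1\<bar> \<le> sqrt L * sqrt A1"
  shows "hs * F * I1 - \<mu> * Q1 - \<kappa> * B + eps * (B - c2 * A1 - sh * A2 + hs * F * J1)
      \<le> - decay_const * lyapunov A0 A1 A2 B X + forcing_const * F^2"
proof -
  have "hs * F * I1 \<le> \<mu>/4 * Q1 + hs^2 * L / \<mu> * F^2"
    using mult_le_young_sqrt[of "\<mu>/4" Q1 L I1 hs F] mu_pos L_pos assms(5) I1 by simp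
  moreover have "eps * (hs * F * J1) \<le> eps * (c2/2 * A1 + hs^2 * L / (2 * c2) * F^2)"
    using mult_le_young_sqrt[of "c2/2" A1 L J1 hs F] c2_pos L_pos assms(2) J1 eps_pos
    by (intro mult_left_mono) simp_all
  moreover have "eps * B \<le> \<mu>/4 * Q1"
  proof -
    have "eps * B \<le> eps * (L^2 * Q1)" by (rule mult_left_mono[OF poincare(2)]) (use eps_pos in simp)
    also have "\<dots> \<le> \<mu>/4 * Q1"
      using mult_right_mono[OF eps_le(3) assms(5)] by (simp add: mult.assoc)
    finally show ?thesis .
  qed
  moreover have "0 \<le> \<kappa> * B" using kappa_nonneg assms(4) by simp
  ultimately have "hs * F * I1 - \<mu> * Q1 - \<kappa> * B + eps * (B - c2 * A1 - sh * A2 + hs * F * J1)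
      \<le> - (\<mu>/2 * Q1 + eps * (c2/2) * A1 + eps * sh * A2) + forcing_const * F^2"
    unfolding forcing_const_def by (simp add: algebra_simps)
  then show ?thesis using dissipation_le_lyapunov[OF assms(1-4) X poincare] by simp
qed

lemma sqrt_decay_bound:
  assumes P0: "0 \<le> P0" and S: "0 \<le> S" and t: "0 \<le> t"
    and bound: "lower_const * P \<le> exp (- decay_const * t) * (upper_const * P0)
      + 2 * forcing_const * S^2 / decay_const"
  shows "sqrt P \<le> overshoot * exp (- rate * t) * sqrt P0 + gain * S"
proof -
  define \<gamma> where "\<gamma> = decay_const"
  define k where "k = 2 * forcing_const / (\<gamma> * lower_const)"
  have \<gamma>: "0 < \<gamma>" and k: "0 \<le> k"
    using decay_const_pos forcing_const_nonneg lower_const_pos by (simp_all add: \<gamma>_def k_def)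
  have "P \<le> (upper_const / lower_const) * exp (- \<gamma> * t) * P0 + k * S^2"
    using bound lower_const_pos \<gamma> by (simp add: \<gamma>_def k_def field_simps)
  then have "sqrt P \<le> sqrt ((upper_const / lower_const) * exp (- \<gamma> * t) * P0 + k * S^2)"
    by (rule real_sqrt_le_mono)
  also have "\<dots> \<le> sqrt ((upper_const / lower_const) * exp (- \<gamma> * t) * P0) + sqrt (k * S^2)"
    using upper_const_pos lower_const_pos P0 k by (intro sqrt_add_le_add_sqrt) auto
  also have "sqrt ((upper_const / lower_const) * exp (- \<gamma> * t) * P0)
      = overshoot * exp (- \<gamma> * t / 2) * sqrt P0"
  proof -
    have "sqrt (exp (- \<gamma> * t)) = exp (- \<gamma> * t / 2)"
      by (rule real_sqrt_unique) (simp_all add: power2_eq_square flip: exp_add)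
    then show ?thesis by (simp only: overshoot_def real_sqrt_mult)
  qed
  also have "sqrt (k * S^2) = sqrt k * S" using S by (simp add: real_sqrt_mult)
  also have "overshoot * exp (- \<gamma> * t / 2) * sqrt P0 \<le> overshoot * exp (- rate * t) * sqrt P0"
    using overshoot_pos P0 t \<gamma> by (intro mult_right_mono mult_left_mono) (auto simp: rate_def \<gamma>_def)
  also have "sqrt k * S \<le> gain * S"
    using S by (intro mult_right_mono) (simp_all add: gain_def k_def \<gamma>_def)
  finally show ?thesis by simp
qed

end

lemma abs_L2_inner_le_avg:
  assumes "in_L2 L u" "in_L2 L v"
  shows "\<bar>L2_inner L u v\<bar> \<le> (L2_inner L u u + L2_inner L v v) / 2"
proof -
  have "\<bar>L2_inner L u v\<bar> \<le> sqrt (L2_inner L u u) * sqrt (L2_inner L v v)"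
    using L2_inner_Cauchy_Schwarz[OF assms] by (simp add: norm2_eq_sqrt_L2_inner)
  also have "\<dots> \<le> (L2_inner L u u + L2_inner L v v) / 2"
    using arith_geo_mean_sqrt[OF L2_inner_self_nonneg L2_inner_self_nonneg]
    by (simp add: real_sqrt_mult)
  finally show ?thesis .
qed

text \<open>\<open>p i t\<close> is the \<open>i\<close>-th \<open>x\<close>-derivative of \<open>phi(t)\<close>, \<open>q i t\<close> that of \<open>phi_t(t)\<close>, and
  \<open>r t\<close> is \<open>phi_tt(t)\<close>.\<close>

locale beam_solution = lyapunov_constants L "g * hs" "\<sigma> * hs" \<mu> \<kappa> hs for L g hs \<sigma> \<mu> \<kappa> :: real +
  fixes f :: "real \<Rightarrow> real" and p q :: "nat \<Rightarrow> real \<Rightarrow> real \<Rightarrow> real" and r :: "real \<Rightarrow> real \<Rightarrow> real"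
  assumes sigma_pos: "0 < \<sigma>"
    and f_continuous: "continuous_on {0..} f"
    and p_in_L2: "\<And>t i. 0 \<le> t \<Longrightarrow> i \<le> 4 \<Longrightarrow> in_L2 L (p i t)"
    and p_weak_deriv: "\<And>t i. 0 \<le> t \<Longrightarrow> i < 4 \<Longrightarrow> weak_deriv L (p i t) (p (Suc i) t)"
    and p1_continuous: "\<And>t. 0 \<le> t \<Longrightarrow> continuous_on {0..L} (p 1 t)"
    and p3_continuous: "\<And>t. 0 \<le> t \<Longrightarrow> continuous_on {0..L} (p 3 t)"
    and q_in_L2: "\<And>t i. 0 \<le> t \<Longrightarrow> i \<le> 2 \<Longrightarrow> in_L2 L (q i t)"
    and q_weak_deriv: "\<And>t i. 0 \<le> t \<Longrightarrow> i < 2 \<Longrightarrow> weak_deriv L (q i t) (q (Suc i) t)"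
    and q1_continuous: "\<And>t. 0 \<le> t \<Longrightarrow> continuous_on {0..L} (q 1 t)"
    and r_in_L2: "\<And>t. 0 \<le> t \<Longrightarrow> in_L2 L (r t)"
    and boundary: "\<And>t. 0 \<le> t \<Longrightarrow> p 1 t 0 = 0 \<and> p 1 t L = 0 \<and> q 1 t 0 = 0 \<and> q 1 t L = 0
      \<and> p 3 t 0 = - f t / \<sigma> \<and> p 3 t L = - f t / \<sigma>"
    and equation: "\<And>t. 0 \<le> t \<Longrightarrow> AE x in lborel_Icc L.
      r t x = g * hs * p 2 t x - \<sigma> * hs * p 4 t x + \<mu> * q 2 t x - \<kappa> * q 0 t x"
    and mean_zero: "\<And>t. 0 \<le> t \<Longrightarrow>
      integral\<^sup>L (lborel_Icc L) (p 0 t) = 0 \<and> integral\<^sup>L (lborel_Icc L) (q 0 t) = 0"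
    and p_continuous: "\<And>t. 0 \<le> t \<Longrightarrow>
      ((\<lambda>s. Hk_dist L 4 (\<lambda>i. p i s) (\<lambda>i. p i t)) \<longlongrightarrow> 0) (at t within {0..})"
    and p_derivative: "\<And>t. 0 \<le> t \<Longrightarrow>
      ((\<lambda>s. Hk_dist L 2 (\<lambda>i x. (p i s x - p i t x) / (s - t)) (\<lambda>i. q i t)) \<longlongrightarrow> 0) (at t within {0..})"
    and q_continuous: "\<And>t. 0 \<le> t \<Longrightarrow>
      ((\<lambda>s. Hk_dist L 2 (\<lambda>i. q i s) (\<lambda>i. q i t)) \<longlongrightarrow> 0) (at t within {0..})"
    and q0_derivative: "\<And>t. 0 \<le> t \<Longrightarrow>
      ((\<lambda>s. norm2 L (\<lambda>x. (q 0 s x - q 0 t x) / (s - t) - r t x)) \<longlongrightarrow> 0) (at t within {0..})"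
begin

definition V :: "real \<Rightarrow> real" where
  "V s = lyapunov (L2_inner L (p 0 s) (p 0 s)) (L2_inner L (p 1 s) (p 1 s)) (L2_inner L (p 2 s) (p 2 s))
    (L2_inner L (q 0 s) (q 0 s)) (L2_inner L (p 0 s) (q 0 s))"

definition V' :: "real \<Rightarrow> real" where
  "V' t = hs * f t * integral\<^sup>L (lborel_Icc L) (q 1 t) - \<mu> * L2_inner L (q 1 t) (q 1 t)
    - \<kappa> * L2_inner L (q 0 t) (q 0 t)
    + eps * (L2_inner L (q 0 t) (q 0 t) - g * hs * L2_inner L (p 1 t) (p 1 t)
      - \<sigma> * hs * L2_inner L (p 2 t) (p 2 t) + hs * f t * integral\<^sup>L (lborel_Icc L) (p 1 t))"

definition P_sq :: "real \<Rightarrow> real" where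
  "P_sq s = (norm2 L (p 0 s))^2 + (norm2 L (p 1 s))^2 + (norm2 L (p 2 s))^2 + (norm2 L (q 0 s))^2"

lemma has_real_derivative_norm_p:
  assumes t: "0 \<le> t" and i: "i \<le> 2"
  shows "((\<lambda>s. L2_inner L (p i s) (p i s)) has_real_derivative 2 * L2_inner L (p i t) (q i t))
    (at t within {0..})"
proof -
  have "((\<lambda>s. L2_inner L (p i s) (p i s)) has_real_derivative
      L2_inner L (q i t) (p i t) + L2_inner L (p i t) (q i t)) (at t within {0..})"
    using p_in_L2 q_in_L2 i t tendsto_norm2_Hk_dist[OF p_continuous[OF t], of i]
      tendsto_norm2_Hk_dist[OF p_derivative[OF t], of i]
    by (intro has_real_derivative_L2_inner[OF t]) auto
  then show ?thesis by (simp add: L2_inner_commute[of L "q i t"])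
qed

lemma has_real_derivative_norm_q0:
  assumes t: "0 \<le> t"
  shows "((\<lambda>s. L2_inner L (q 0 s) (q 0 s)) has_real_derivative 2 * L2_inner L (q 0 t) (r t))
    (at t within {0..})"
proof -
  have "((\<lambda>s. L2_inner L (q 0 s) (q 0 s)) has_real_derivative
      L2_inner L (r t) (q 0 t) + L2_inner L (q 0 t) (r t)) (at t within {0..})"
    using q_in_L2 r_in_L2 t tendsto_norm2_Hk_dist[OF q_continuous[OF t], of 0] q0_derivative[OF t]
    by (intro has_real_derivative_L2_inner[OF t]) auto
  then show ?thesis by (simp add: L2_inner_commute[of L "r t"])
qed

lemma has_real_derivative_L2_inner_p0_q0:
  assumes t: "0 \<le> t"
  shows "((\<lambda>s. L2_inner L (p 0 s) (q 0 s)) has_real_derivative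
    L2_inner L (q 0 t) (q 0 t) + L2_inner L (p 0 t) (r t)) (at t within {0..})"
  using p_in_L2 q_in_L2 r_in_L2 t tendsto_norm2_Hk_dist[OF q_continuous[OF t], of 0]
    tendsto_norm2_Hk_dist[OF p_derivative[OF t], of 0] q0_derivative[OF t]
  by (intro has_real_derivative_L2_inner[OF t]) auto

lemma weak_derivs:
  assumes t: "0 \<le> t"
  shows "weak_deriv L (p 0 t) (p 1 t)" "weak_deriv L (p 1 t) (p 2 t)" "weak_deriv L (p 2 t) (p 3 t)"
    "weak_deriv L (p 3 t) (p 4 t)" "weak_deriv L (q 0 t) (q 1 t)" "weak_deriv L (q 1 t) (q 2 t)"
  using p_weak_deriv[OF t, of 0] p_weak_deriv[OF t, of 1] p_weak_deriv[OF t, of 2]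
    p_weak_deriv[OF t, of 3] q_weak_deriv[OF t, of 0] q_weak_deriv[OF t, of 1]
  by (simp_all add: numeral_eq_Suc)

text \<open>Testing the equation against \<open>phi_t\<close> and \<open>phi\<close>: by the boundary value
  \<open>phi_xxx = -f/sigma\<close>, the term \<open>-sigma h phi_xxxx\<close> contributes the flux \<open>h f\<close>.\<close>

lemma L2_inner_q0_r:
  assumes t: "0 \<le> t"
  shows "L2_inner L (q 0 t) (r t) = hs * f t * integral\<^sup>L (lborel_Icc L) (q 1 t)
    - g * hs * L2_inner L (p 1 t) (q 1 t) - \<sigma> * hs * L2_inner L (p 2 t) (q 2 t)
    - \<mu> * L2_inner L (q 1 t) (q 1 t) - \<kappa> * L2_inner L (q 0 t) (q 0 t)"
proof -
  note w = weak_derivs[OF t] and bc = boundary[OF t]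
  have "L2_inner L (q 0 t) (p 2 t) + L2_inner L (q 1 t) (p 1 t) = 0"
    using weak_deriv_integration_by_parts[OF L_pos w(5) w(2) _ _ p1_continuous[OF t], of 0]
      p_in_L2 q_in_L2 t bc by simp
  then have e1: "L2_inner L (q 0 t) (p 2 t) = - L2_inner L (p 1 t) (q 1 t)"
    using L2_inner_commute[of L "q 1 t" "p 1 t"] by linarith
  have "L2_inner L (q 0 t) (p 4 t) + L2_inner L (q 1 t) (p 3 t)
      = - f t / \<sigma> * integral\<^sup>L (lborel_Icc L) (q 1 t)"
    using weak_deriv_integration_by_parts[OF L_pos w(5) w(4) _ _ p3_continuous[OF t]]
      p_in_L2 q_in_L2 t bc by simp
  moreover have "L2_inner L (p 2 t) (q 2 t) + L2_inner L (p 3 t) (q 1 t) = 0"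
    using weak_deriv_integration_by_parts[OF L_pos w(3) w(6) _ _ q1_continuous[OF t], of 0]
      p_in_L2 q_in_L2 t bc by simp
  ultimately have "L2_inner L (q 0 t) (p 4 t)
      = - f t / \<sigma> * integral\<^sup>L (lborel_Icc L) (q 1 t) + L2_inner L (p 2 t) (q 2 t)"
    using L2_inner_commute[of L "q 1 t" "p 3 t"] by linarith
  then have \<sigma>_eq: "\<sigma> * L2_inner L (q 0 t) (p 4 t)
      = - f t * integral\<^sup>L (lborel_Icc L) (q 1 t) + \<sigma> * L2_inner L (p 2 t) (q 2 t)"
    using sigma_pos by (simp add: field_simps)
  have e2: "\<sigma> * hs * L2_inner L (q 0 t) (p 4 t)
      = - hs * f t * integral\<^sup>L (lborel_Icc L) (q 1 t) + \<sigma> * hs * L2_inner L (p 2 t) (q 2 t)"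
    using arg_cong[OF \<sigma>_eq, of "\<lambda>z. hs * z"] by (simp add: algebra_simps)
  have "L2_inner L (q 0 t) (q 2 t) + L2_inner L (q 1 t) (q 1 t) = 0"
    using weak_deriv_integration_by_parts[OF L_pos w(5) w(6) _ _ q1_continuous[OF t], of 0]
      q_in_L2 t bc by simp
  then have e3: "L2_inner L (q 0 t) (q 2 t) = - L2_inner L (q 1 t) (q 1 t)" by simp
  have "L2_inner L (q 0 t) (r t) = g * hs * L2_inner L (q 0 t) (p 2 t)
      - \<sigma> * hs * L2_inner L (q 0 t) (p 4 t) + \<mu> * L2_inner L (q 0 t) (q 2 t)
      - \<kappa> * L2_inner L (q 0 t) (q 0 t)"
    using p_in_L2 q_in_L2 r_in_L2 t by (intro L2_inner_expand_AE[OF equation[OF t]]) auto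
  then show ?thesis unfolding e1 e2 e3 by simp
qed

lemma L2_inner_p0_r:
  assumes t: "0 \<le> t"
  shows "L2_inner L (p 0 t) (r t) = hs * f t * integral\<^sup>L (lborel_Icc L) (p 1 t)
    - g * hs * L2_inner L (p 1 t) (p 1 t) - \<sigma> * hs * L2_inner L (p 2 t) (p 2 t)
    - \<mu> * L2_inner L (p 1 t) (q 1 t) - \<kappa> * L2_inner L (p 0 t) (q 0 t)"
proof -
  note w = weak_derivs[OF t] and bc = boundary[OF t]
  have "L2_inner L (p 0 t) (p 2 t) + L2_inner L (p 1 t) (p 1 t) = 0"
    using weak_deriv_integration_by_parts[OF L_pos w(1) w(2) _ _ p1_continuous[OF t], of 0]
      p_in_L2 t bc by simp
  then have e1: "L2_inner L (p 0 t) (p 2 t) = - L2_inner L (p 1 t) (p 1 t)" by simp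
  have "L2_inner L (p 0 t) (p 4 t) + L2_inner L (p 1 t) (p 3 t)
      = - f t / \<sigma> * integral\<^sup>L (lborel_Icc L) (p 1 t)"
    using weak_deriv_integration_by_parts[OF L_pos w(1) w(4) _ _ p3_continuous[OF t]]
      p_in_L2 t bc by simp
  moreover have "L2_inner L (p 2 t) (p 2 t) + L2_inner L (p 3 t) (p 1 t) = 0"
    using weak_deriv_integration_by_parts[OF L_pos w(3) w(2) _ _ p1_continuous[OF t], of 0]
      p_in_L2 t bc by simp
  ultimately have "L2_inner L (p 0 t) (p 4 t)
      = - f t / \<sigma> * integral\<^sup>L (lborel_Icc L) (p 1 t) + L2_inner L (p 2 t) (p 2 t)"
    using L2_inner_commute[of L "p 1 t" "p 3 t"] by linarith
  then have \<sigma>_eq: "\<sigma> * L2_inner L (p 0 t) (p 4 t)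
      = - f t * integral\<^sup>L (lborel_Icc L) (p 1 t) + \<sigma> * L2_inner L (p 2 t) (p 2 t)"
    using sigma_pos by (simp add: field_simps)
  have e2: "\<sigma> * hs * L2_inner L (p 0 t) (p 4 t)
      = - hs * f t * integral\<^sup>L (lborel_Icc L) (p 1 t) + \<sigma> * hs * L2_inner L (p 2 t) (p 2 t)"
    using arg_cong[OF \<sigma>_eq, of "\<lambda>z. hs * z"] by (simp add: algebra_simps)
  have "L2_inner L (p 0 t) (q 2 t) + L2_inner L (p 1 t) (q 1 t) = 0"
    using weak_deriv_integration_by_parts[OF L_pos w(1) w(6) _ _ q1_continuous[OF t], of 0]
      p_in_L2 q_in_L2 t bc by simp
  then have e3: "L2_inner L (p 0 t) (q 2 t) = - L2_inner L (p 1 t) (q 1 t)" by simp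
  have "L2_inner L (p 0 t) (r t) = g * hs * L2_inner L (p 0 t) (p 2 t)
      - \<sigma> * hs * L2_inner L (p 0 t) (p 4 t) + \<mu> * L2_inner L (p 0 t) (q 2 t)
      - \<kappa> * L2_inner L (p 0 t) (q 0 t)"
    using p_in_L2 q_in_L2 r_in_L2 t by (intro L2_inner_expand_AE[OF equation[OF t]]) auto
  then show ?thesis unfolding e1 e2 e3 by simp
qed

lemma has_real_derivative_V:
  assumes t: "0 \<le> t"
  shows "(V has_real_derivative V' t) (at t within {0..})"
proof -
  have "(V has_real_derivative
      1/2 * (2 * L2_inner L (q 0 t) (r t)) + g * hs / 2 * (2 * L2_inner L (p 1 t) (q 1 t))
      + \<sigma> * hs / 2 * (2 * L2_inner L (p 2 t) (q 2 t))
      + eps * ((L2_inner L (q 0 t) (q 0 t) + L2_inner L (p 0 t) (r t))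
        + \<mu> / 2 * (2 * L2_inner L (p 1 t) (q 1 t)) + \<kappa> / 2 * (2 * L2_inner L (p 0 t) (q 0 t))))
      (at t within {0..})"
    unfolding V_def[abs_def] lyapunov_def
    by (intro DERIV_add DERIV_cmult has_real_derivative_norm_q0 has_real_derivative_norm_p
        has_real_derivative_L2_inner_p0_q0 t) simp_all
  then show ?thesis
    by (simp add: V'_def L2_inner_q0_r[OF t] L2_inner_p0_r[OF t] algebra_simps)
qed

lemma energy_estimates:
  assumes t: "0 \<le> t"
  shows "lower_const * P_sq t \<le> V t" "V t \<le> upper_const * P_sq t"
    "V' t \<le> - decay_const * V t + forcing_const * (f t)^2"
proof -
  have L2: "in_L2 L (p 0 t)" "in_L2 L (p 1 t)" "in_L2 L (q 0 t)" "in_L2 L (q 1 t)"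
    using p_in_L2 q_in_L2 t by auto
  have poincare: "L2_inner L (p 0 t) (p 0 t) \<le> L^2 * L2_inner L (p 1 t) (p 1 t)"
      "L2_inner L (q 0 t) (q 0 t) \<le> L^2 * L2_inner L (q 1 t) (q 1 t)"
    using poincare_wirtinger[OF L_pos weak_derivs(1)[OF t] L2(1,2)]
      poincare_wirtinger[OF L_pos weak_derivs(5)[OF t] L2(3,4)] mean_zero[OF t] by auto
  have mean_bounds: "\<bar>integral\<^sup>L (lborel_Icc L) (q 1 t)\<bar> \<le> sqrt L * sqrt (L2_inner L (q 1 t) (q 1 t))"
      "\<bar>integral\<^sup>L (lborel_Icc L) (p 1 t)\<bar> \<le> sqrt L * sqrt (L2_inner L (p 1 t) (p 1 t))"
    using abs_integral_le_norm2[OF _ L2(4)] abs_integral_le_norm2[OF _ L2(2)] L_pos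
    by (simp_all add: norm2_eq_sqrt_L2_inner)
  have nonneg: "0 \<le> L2_inner L (p 0 t) (p 0 t)" "0 \<le> L2_inner L (p 1 t) (p 1 t)"
      "0 \<le> L2_inner L (p 2 t) (p 2 t)" "0 \<le> L2_inner L (q 0 t) (q 0 t)"
      "0 \<le> L2_inner L (q 1 t) (q 1 t)"
    by (simp_all add: L2_inner_self_nonneg)
  note X = abs_L2_inner_le_avg[OF L2(1,3)]
  have P: "P_sq t = L2_inner L (p 0 t) (p 0 t) + L2_inner L (p 1 t) (p 1 t)
      + L2_inner L (p 2 t) (p 2 t) + L2_inner L (q 0 t) (q 0 t)"
    by (simp add: P_sq_def norm2_power2)
  show "lower_const * P_sq t \<le> V t"
    unfolding V_def P by (rule lyapunov_ge[OF nonneg(1-4) X poincare(1)])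
  show "V t \<le> upper_const * P_sq t"
    unfolding V_def P by (rule lyapunov_le[OF nonneg(1-4) X])
  show "V' t \<le> - decay_const * V t + forcing_const * (f t)^2"
    unfolding V_def V'_def
    using energy_derivative_le[OF nonneg X poincare mean_bounds, of "f t"]
    by (simp add: algebra_simps)
qed

lemma decay_estimate:
  assumes t: "0 \<le> t"
  shows "sqrt (P_sq t) \<le> overshoot * exp (- rate * t) * sqrt (P_sq 0)
    + gain * (SUP s\<in>{0..t}. exp (- rate * (t - s)) * \<bar>f s\<bar>)"
proof -
  define S where "S = (SUP s\<in>{0..t}. exp (- rate * (t - s)) * \<bar>f s\<bar>)"
  have "continuous_on {0..t} (\<lambda>s. exp (- rate * (t - s)) * \<bar>f s\<bar>)"
    using continuous_on_subset[OF f_continuous, of "{0..t}"] by (intro continuous_intros) auto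
  then have "bdd_above ((\<lambda>s. exp (- rate * (t - s)) * \<bar>f s\<bar>) ` {0..t})"
    by (intro bounded_imp_bdd_above compact_imp_bounded compact_continuous_image compact_Icc)
  then have S: "exp (- rate * (t - s)) * \<bar>f s\<bar> \<le> S" if "s \<in> {0..t}" for s
    unfolding S_def by (rule cSUP_upper[OF that])
  have "0 \<le> S" using S[of t] t by simp
  have "V t \<le> exp (- decay_const * t) * V 0 + 2 * forcing_const * S^2 / decay_const"
  proof (rule differential_inequality_decay[where V' = V' and f = f])
    show "exp (- (decay_const / 4) * (t - s)) * \<bar>f s\<bar> \<le> S" if "s \<in> {0..t}" for s
      using S[OF that] by (simp add: rate_def)
  qed (use has_real_derivative_V energy_estimates(3) decay_const_pos forcing_const_nonneg t \<open>0 \<le> S\<close>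
       in auto)
  moreover have "exp (- decay_const * t) * V 0 \<le> exp (- decay_const * t) * (upper_const * P_sq 0)"
    using energy_estimates(2)[of 0] by (intro mult_left_mono) auto
  ultimately have bound: "lower_const * P_sq t
      \<le> exp (- decay_const * t) * (upper_const * P_sq 0) + 2 * forcing_const * S^2 / decay_const"
    using energy_estimates(1)[OF t] by linarith
  show ?thesis
    unfolding S_def[symmetric] by (rule sqrt_decay_bound[OF _ \<open>0 \<le> S\<close> t bound]) (simp add: P_sq_def)
qed

end

theorem theorem5:
  fixes L hs g \<mu> \<sigma> \<kappa> :: real
  assumes "L > 0" "hs > 0" "g > 0" "\<mu> > 0" "\<sigma> > 0" "\<kappa> \<ge> 0"
  shows "\<exists>M lam \<Gamma>. M > 0 \<and> lam > 0 \<and> \<Gamma> > 0 \<and>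
    (\<forall>(f :: real \<Rightarrow> real) (p :: nat \<Rightarrow> real \<Rightarrow> real \<Rightarrow> real)
       (q :: nat \<Rightarrow> real \<Rightarrow> real \<Rightarrow> real) (r :: real \<Rightarrow> real \<Rightarrow> real).
      continuous_on {0..} f
      \<and> (\<forall>t\<ge>0.
           (\<forall>i\<le>4. in_L2 L (p i t)) \<and> (\<forall>i<4. weak_deriv L (p i t) (p (Suc i) t))
         \<and> continuous_on {0..L} (p 1 t) \<and> continuous_on {0..L} (p 3 t)
         \<and> (\<forall>i\<le>2. in_L2 L (q i t)) \<and> (\<forall>i<2. weak_deriv L (q i t) (q (Suc i) t))
         \<and> continuous_on {0..L} (q 1 t)
         \<and> in_L2 L (r t)
         \<and> p 1 t 0 = 0 \<and> p 1 t L = 0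
         \<and> q 1 t 0 = 0 \<and> q 1 t L = 0
         \<and> p 3 t 0 = - f t / \<sigma> \<and> p 3 t L = - f t / \<sigma>
         \<and> (AE x in lborel. 0 < x \<and> x < L \<longrightarrow>
              r t x = (sqrt (g * hs))^2 * p 2 t x - \<sigma> * hs * p 4 t x
                      + \<mu> * q 2 t x - \<kappa> * q 0 t x)
         \<and> (LINT x:{0..L}|lborel. p 0 t x) = 0
         \<and> (LINT x:{0..L}|lborel. q 0 t x) = 0
         \<and> ((\<lambda>s. Hk_dist L 4 (\<lambda>i. p i s) (\<lambda>i. p i t)) \<longlongrightarrow> 0) (at t within {0..})
         \<and> ((\<lambda>s. Hk_dist L 2 (\<lambda>i x. (p i s x - p i t x) / (s - t)) (\<lambda>i. q i t)) \<longlongrightarrow> 0)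
              (at t within {0..})
         \<and> ((\<lambda>s. Hk_dist L 2 (\<lambda>i. q i s) (\<lambda>i. q i t)) \<longlongrightarrow> 0) (at t within {0..})
         \<and> ((\<lambda>s. norm2 L (\<lambda>x. (q 0 s x - q 0 t x) / (s - t) - r t x)) \<longlongrightarrow> 0)
              (at t within {0..})
         \<and> ((\<lambda>s. norm2 L (\<lambda>x. r s x - r t x)) \<longlongrightarrow> 0) (at t within {0..}))
      \<longrightarrow> (\<forall>t\<ge>0.
            sqrt ((norm2 L (p 0 t))^2 + (norm2 L (p 1 t))^2 + (norm2 L (p 2 t))^2
                  + (norm2 L (q 0 t))^2)
            \<le> M * exp (- lam * t) *
                sqrt ((norm2 L (p 0 0))^2 + (norm2 L (p 1 0))^2 + (norm2 L (p 2 0))^2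
                      + (norm2 L (q 0 0))^2)
              + \<Gamma> * (SUP s\<in>{0..t}. exp (- lam * (t - s)) * \<bar>f s\<bar>)))"
proof -
  interpret lyapunov_constants L "g * hs" "\<sigma> * hs" \<mu> \<kappa> hs
    using assms by unfold_locales simp_all
  have c_sq: "(sqrt (g * hs))^2 = g * hs" using assms by simp
  show ?thesis
    apply (rule exI[of _ overshoot], rule exI[of _ rate], rule exI[of _ gain])
    apply (intro conjI overshoot_pos rate_pos gain_pos allI impI)
    subgoal premises prems for f p q r t
    proof -
      interpret beam_solution L g hs \<sigma> \<mu> \<kappa> f p q r
        by unfold_locales
          (use assms prems(1) c_sq in
            \<open>auto simp: set_integral_eq_lborel_Icc intro!: AE_lborel_Icc_open\<close>)
      show ?thesis using decay_estimate[OF prems(2)] by (simp only: P_sq_def)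
    qed
    done
qed

end
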